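(* Fix $\lambda>0$. The function $\mathbf{K}\mapsto\mathcal{L}(\mathbf{K},\lambda)$ defined in the context is twice continuously differentiable on $\mathcal{K}$.
   Context: Consider the linear system $\mathbf{x}_{k+1}=\mathbf{A}\mathbf{x}_k+\mathbf{B}\mathbf{u}_k+\mathbf{w}_k$ with $\mathbf{x}_k\in\mathbb{R}^n$, $\mathbf{u}_k\in\mathbb{R}^p$, $(\mathbf{A},\mathbf{B})$ stabilizable, and i.i.d. noise $\mathbf{w}_k\sim\mathcal{N}(0,\Sigma_w)$. Let $\mathbf{Q}\in\mathbb{R}^{n\times n}$, $\mathbf{R}\in\mathbb{R}^{p\times p}$ be positive definite, $(\mathbf{A},\mathbf{Q}^{1/2})$ detectable, $\epsilon>0$, $\delta>0$, $\mathbf{q}\in\mathbb{R}^n$. Policies are $\mathbf{u}_k=-\mathbf{K}\mathbf{x}_k+\sigma_k$ with $\sigma_k\sim\mathcal{N}(0,\Sigma_\sigma)$ i.i.d., $\Sigma_\sigma$ a fixed covariance matrix. Let $\Sigma_{\bar w}=\Sigma_w+\mathbf{B}\Sigma_\sigma\mathbf{B}^T$ and $\mathcal{K}=\{\mathbf{K}\in\mathbb{R}^{p\times n}:\rho(\mathbf{A}-\mathbf{B}\mathbf{K})<1\}$. For $\mathbf{K}\in\mathcal{K}$, let $\Sigma_K$ solve $\Sigma_K=\Sigma_{\bar w}+(\mathbf{A}-\mathbf{B}\mathbf{K})\Sigma_K(\mathbf{A}-\mathbf{B}\mathbf{K})^T$. Define $J(\mathbf{K})=\mathrm{tr}((\mathbf{Q}+\mathbf{K}^T\mathbf{R}\mathbf{K})\Sigma_K+\mathbf{R}\Sigma_\sigma)$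 and $J_c(\mathbf{K})=\mathrm{E}[Q(a(\mathbf{x},\mathbf{K}))]$ with $\mathbf{x}\sim\mathcal{N}(0,\Sigma_K)$ the stationary closed-loop state, $Q(a)=\frac{1}{\sqrt{2\pi}}\int_a^\infty e^{-z^2/2}dz$, $a(\mathbf{x},\mathbf{K})=\frac{\epsilon-\mathbf{q}^T(\mathbf{A}-\mathbf{B}\mathbf{K})\mathbf{x}}{\sqrt{\mathbf{q}^T\Sigma_{\bar w}\mathbf{q}}}$. The Lagrangian is $\mathcal{L}(\mathbf{K},\lambda)=J(\mathbf{K})+\lambda(J_c(\mathbf{K})-\delta)$. *)

theory Defs
  imports "HOL-Analysis.Analysis" "HOL-Probability.Probability"
begin

definition cmat :: "real^'n^'n \<Rightarrow> complex^'n^'n" where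
  "cmat M = (\<chi> i j. complex_of_real (M $ i $ j))"

definition spec_rad :: "real^'n^'n \<Rightarrow> real" where
  "spec_rad M = Max {cmod l | l. det (mat l - cmat M) = 0}"

definition pos_def_mat :: "real^'n^'n \<Rightarrow> bool" where
  "pos_def_mat M \<longleftrightarrow> transpose M = M \<and> (\<forall>x. x \<noteq> 0 \<longrightarrow> x \<bullet> (M *v x) > 0)"

definition psd_mat :: "real^'n^'n \<Rightarrow> bool" where
  "psd_mat M \<longleftrightarrow> transpose M = M \<and> (\<forall>x. x \<bullet> (M *v x) \<ge> 0)"

definition stabilizable :: "real^'n^'n \<Rightarrow> real^'p^'n \<Rightarrow> bool" where
  "stabilizable A B \<longleftrightarrow> (\<exists>K::real^'n^'p. spec_rad (A - B ** K) < 1)"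

definition detectable :: "real^'n^'n \<Rightarrow> real^'n^'m \<Rightarrow> bool" where
  "detectable A C \<longleftrightarrow> (\<exists>L::real^'m^'n. spec_rad (A - L ** C) < 1)"

definition psd_sqrt :: "real^'n^'n \<Rightarrow> real^'n^'n" where
  "psd_sqrt M = (THE S. psd_mat S \<and> S ** S = M)"

text \<open>Expectation of f(x) for x ~ N(0,\<Sigma>): x = L z with L L^T = \<Sigma> and z standard
  normal on R^n (product of independent standard normals).\<close>
definition gauss_expect :: "real^'n^'n \<Rightarrow> (real^'n \<Rightarrow> real) \<Rightarrow> real" where
  "gauss_expect \<Sigma> f =
     (let L = (SOME L::real^'n^'n. L ** transpose L = \<Sigma>) in
      integral\<^sup>L (PiM UNIV (\<lambda>_::'n. std_normal_distribution)) (\<lambda>z. f (L *v (\<chi> i. z i))))"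

definition Qfun :: "real \<Rightarrow> real" where
  "Qfun a = (1 / sqrt (2 * pi)) * integral {a..} (\<lambda>z. exp (- (z\<^sup>2) / 2))"

definition Sigma_wbar :: "real^'p^'n \<Rightarrow> real^'n^'n \<Rightarrow> real^'p^'p \<Rightarrow> real^'n^'n" where
  "Sigma_wbar B Sw Ss = Sw + B ** Ss ** transpose B"

definition Sigma_K :: "real^'n^'n \<Rightarrow> real^'p^'n \<Rightarrow> real^'n^'n \<Rightarrow> real^'p^'p \<Rightarrow> real^'n^'p
    \<Rightarrow> real^'n^'n" where
  "Sigma_K A B Sw Ss K =
     (THE S. S = Sigma_wbar B Sw Ss + (A - B ** K) ** S ** transpose (A - B ** K))"

definition Jcost :: "real^'n^'n \<Rightarrow> real^'p^'n \<Rightarrow> real^'n^'n \<Rightarrow> real^'p^'p \<Rightarrow> real^'n^'n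
    \<Rightarrow> real^'p^'p \<Rightarrow> real^'n^'p \<Rightarrow> real" where
  "Jcost A B Sw Ss Q R K =
     trace ((Q + transpose K ** R ** K) ** Sigma_K A B Sw Ss K) + trace (R ** Ss)"

definition a_fun :: "real^'n^'n \<Rightarrow> real^'p^'n \<Rightarrow> real^'n^'n \<Rightarrow> real^'p^'p \<Rightarrow> real
    \<Rightarrow> real^'n \<Rightarrow> real^'n \<Rightarrow> real^'n^'p \<Rightarrow> real" where
  "a_fun A B Sw Ss \<epsilon> q x K =
     (\<epsilon> - q \<bullet> ((A - B ** K) *v x)) / sqrt (q \<bullet> (Sigma_wbar B Sw Ss *v q))"

definition Jc :: "real^'n^'n \<Rightarrow> real^'p^'n \<Rightarrow> real^'n^'n \<Rightarrow> real^'p^'p \<Rightarrow> real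
    \<Rightarrow> real^'n \<Rightarrow> real^'n^'p \<Rightarrow> real" where
  "Jc A B Sw Ss \<epsilon> q K =
     gauss_expect (Sigma_K A B Sw Ss K) (\<lambda>x. Qfun (a_fun A B Sw Ss \<epsilon> q x K))"

definition Lagr :: "real^'n^'n \<Rightarrow> real^'p^'n \<Rightarrow> real^'n^'n \<Rightarrow> real^'p^'p \<Rightarrow> real^'n^'n
    \<Rightarrow> real^'p^'p \<Rightarrow> real \<Rightarrow> real \<Rightarrow> real^'n \<Rightarrow> real^'n^'p \<Rightarrow> real \<Rightarrow> real" where
  "Lagr A B Sw Ss Q R \<epsilon> \<delta> q K lam =
     Jcost A B Sw Ss Q R K + lam * (Jc A B Sw Ss \<epsilon> q K - \<delta>)"

definition C2_on :: "'a::real_normed_vector set \<Rightarrow> ('a \<Rightarrow> 'b::real_normed_vector) \<Rightarrow> bool" where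
  "C2_on S f \<longleftrightarrow>
     (\<exists>(Df::'a \<Rightarrow> 'a \<Rightarrow>\<^sub>L 'b) (D2f::'a \<Rightarrow> 'a \<Rightarrow>\<^sub>L ('a \<Rightarrow>\<^sub>L 'b)).
        (\<forall>x\<in>S. (f has_derivative blinfun_apply (Df x)) (at x)) \<and>
        (\<forall>x\<in>S. (Df has_derivative blinfun_apply (D2f x)) (at x)) \<and>
        continuous_on S D2f)"

end

(*
  On the open set of stabilizing gains K the Lyapunov equation
  Sigma = Sigma_wbar + (A - B K) Sigma (A - B K)^T has exactly one solution, because
  (A - B K)^k tends to 0 when the spectral radius is below 1: the entries of M^k are the Taylor
  coefficients at 0 of the resolvent (I - z M)^-1, which is holomorphic on a disc of radius
  greater than 1.  Uniqueness makes the vectorized linear system invertible, so by Cramer's rule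
  Sigma_K is a rational function of K without poles there, and J is smooth.
  For the constraint, q^T (A - B K) x is a centred Gaussian when x ~ N(0, Sigma_K), and averaging
  the Gaussian tail function Q against it gives J_c(K) = Q(eps / sqrt (q^T Sigma_K q)) after one more
  use of the Lyapunov equation; this is smooth since q^T Sigma_K q >= q^T Sigma_wbar q > 0
  (if q^T Sigma_wbar q = 0, then J_c is constant).
*)
theory Submission
  imports Defs "HOL-Complex_Analysis.Complex_Analysis"
    "HOL-Computational_Algebra.Fundamental_Theorem_Algebra"
begin

no_notation fps_nth (infixl \<open>$\<close> 75)

section \<open>Twice continuously differentiable maps\<close>

definition C1_on :: "'a::real_normed_vector set \<Rightarrow> ('a \<Rightarrow> 'b::real_normed_vector) \<Rightarrow> bool" where
  "C1_on U f \<longleftrightarrow> (\<exists>Df::'a \<Rightarrow> 'a \<Rightarrow>\<^sub>L 'b.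
     (\<forall>x\<in>U. (f has_derivative blinfun_apply (Df x)) (at x)) \<and> continuous_on U Df)"

text \<open>Twice continuous differentiability, phrased as differentiability with a \<open>C1_on\<close> derivative so
  that the sum, product and chain rules below only need their first-order versions.\<close>
definition C1_deriv_on :: "'a::real_normed_vector set \<Rightarrow> ('a \<Rightarrow> 'b::real_normed_vector) \<Rightarrow> bool" where
  "C1_deriv_on U f \<longleftrightarrow> (\<exists>Df::'a \<Rightarrow> 'a \<Rightarrow>\<^sub>L 'b.
     (\<forall>x\<in>U. (f has_derivative blinfun_apply (Df x)) (at x)) \<and> C1_on U Df)"

lemma C1_onI:
  "(\<And>x. x \<in> U \<Longrightarrow> (f has_derivative blinfun_apply (Df x)) (at x)) \<Longrightarrow> continuous_on U Df \<Longrightarrow>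
    C1_on U f"
  unfolding C1_on_def by blast

lemma C1_onE:
  assumes "C1_on U f"
  obtains Df where "\<And>x. x \<in> U \<Longrightarrow> (f has_derivative blinfun_apply (Df x)) (at x)"
    and "continuous_on U Df"
  using assms unfolding C1_on_def by blast

lemma C1_deriv_onI:
  "(\<And>x. x \<in> U \<Longrightarrow> (f has_derivative blinfun_apply (Df x)) (at x)) \<Longrightarrow> C1_on U Df \<Longrightarrow>
    C1_deriv_on U f"
  unfolding C1_deriv_on_def by blast

lemma C1_deriv_onE:
  assumes "C1_deriv_on U f"
  obtains Df where "\<And>x. x \<in> U \<Longrightarrow> (f has_derivative blinfun_apply (Df x)) (at x)"
    and "C1_on U Df"
  using assms unfolding C1_deriv_on_def by blast

lemma C1_on_imp_continuous_on: "C1_on U f \<Longrightarrow> continuous_on U f"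
  by (metis C1_onE continuous_at_imp_continuous_on has_derivative_continuous)

lemma C1_deriv_on_imp_C1_on: "C1_deriv_on U f \<Longrightarrow> C1_on U f"
  by (metis C1_deriv_onE C1_onI C1_on_imp_continuous_on)

lemma C1_deriv_on_imp_C2_on: "C1_deriv_on U f \<Longrightarrow> C2_on U f"
  unfolding C1_deriv_on_def C1_on_def C2_on_def by blast

lemma C1_on_const: "C1_on U (\<lambda>x. c)"
  by (rule C1_onI[of _ _ "\<lambda>x. 0"]) (auto simp: zero_blinfun.rep_eq[abs_def])

lemma C1_deriv_on_const: "C1_deriv_on U (\<lambda>x. c)"
  by (rule C1_deriv_onI[of _ _ "\<lambda>x. 0"]) (auto simp: zero_blinfun.rep_eq[abs_def] C1_on_const)

lemma C1_on_linear: "bounded_linear L \<Longrightarrow> C1_on U L"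
  by (rule C1_onI[of _ _ "\<lambda>x. Blinfun L"])
     (auto simp: bounded_linear_Blinfun_apply intro: bounded_linear_imp_has_derivative)

lemma C1_deriv_on_linear: "bounded_linear L \<Longrightarrow> C1_deriv_on U L"
  by (rule C1_deriv_onI[of _ _ "\<lambda>x. Blinfun L"])
     (auto simp: bounded_linear_Blinfun_apply intro: bounded_linear_imp_has_derivative C1_on_const)

lemma has_derivative_add_blinfun:
  fixes Df Dg :: "'a::real_normed_vector \<Rightarrow>\<^sub>L 'b::real_normed_vector"
  shows "(f has_derivative Df) F \<Longrightarrow> (g has_derivative Dg) F \<Longrightarrow>
    ((\<lambda>x. f x + g x) has_derivative (Df + Dg)) F"
  by (simp add: plus_blinfun.rep_eq[abs_def] has_derivative_add)

lemma (in bounded_bilinear) has_derivative_blinfun: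
  fixes Df :: "'d::real_normed_vector \<Rightarrow>\<^sub>L 'a" and Dg :: "'d \<Rightarrow>\<^sub>L 'b"
  assumes "(f has_derivative Df) (at x)" "(g has_derivative Dg) (at x)"
  shows "((\<lambda>x. prod (f x) (g x)) has_derivative
      ((prod_right (f x) o\<^sub>L Dg) + (prod_left (g x) o\<^sub>L Df))) (at x)"
proof -
  have "((\<lambda>x. prod (f x) (g x)) has_derivative (\<lambda>h. prod (f x) (Dg h) + prod (Df h) (g x))) (at x)"
    by (rule FDERIV[OF assms])
  moreover have "blinfun_apply ((prod_right (f x) o\<^sub>L Dg) + (prod_left (g x) o\<^sub>L Df))
      = (\<lambda>h. prod (f x) (Dg h) + prod (Df h) (g x))"
    by (intro ext) (simp add: blinfun.add_left)
  ultimately show ?thesis by simp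
qed

lemma has_derivative_compose_blinfun:
  fixes Df :: "'a::real_normed_vector \<Rightarrow>\<^sub>L 'b::real_normed_vector"
    and Dg :: "'b \<Rightarrow>\<^sub>L 'c::real_normed_vector"
  assumes "(f has_derivative Df) (at x)" "(g has_derivative Dg) (at (f x))"
  shows "((\<lambda>x. g (f x)) has_derivative (Dg o\<^sub>L Df)) (at x)"
  using diff_chain_at[OF assms] by (simp add: o_def blinfun_compose.rep_eq[abs_def])

lemma C1_on_add:
  assumes "C1_on U f" "C1_on U g"
  shows "C1_on U (\<lambda>x. f x + g x)"
proof -
  from assms obtain Df Dg
    where "\<And>x. x \<in> U \<Longrightarrow> (f has_derivative blinfun_apply (Df x)) (at x)" "continuous_on U Df"
      and "\<And>x. x \<in> U \<Longrightarrow> (g has_derivative blinfun_apply (Dg x)) (at x)" "continuous_on U Dg"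
    by (metis C1_onE)
  then show ?thesis
    by (intro C1_onI[of _ _ "\<lambda>x. Df x + Dg x"]) (auto intro: has_derivative_add_blinfun continuous_on_add)
qed

lemma C1_on_bilinear:
  assumes "bounded_bilinear pr" and f: "C1_on U f" and g: "C1_on U g"
  shows "C1_on U (\<lambda>x. pr (f x) (g x))"
proof -
  interpret bounded_bilinear pr by fact
  from f g obtain Df Dg
    where Df: "\<And>x. x \<in> U \<Longrightarrow> (f has_derivative blinfun_apply (Df x)) (at x)" "continuous_on U Df"
      and Dg: "\<And>x. x \<in> U \<Longrightarrow> (g has_derivative blinfun_apply (Dg x)) (at x)" "continuous_on U Dg"
    by (metis C1_onE)
  have "continuous_on U (\<lambda>x. prod_right (f x))"
    by (rule bounded_linear.continuous_on[OF bounded_linear_prod_right C1_on_imp_continuous_on[OF f]])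
  moreover have "continuous_on U (\<lambda>x. prod_left (g x))"
    by (rule bounded_linear.continuous_on[OF bounded_linear_prod_left C1_on_imp_continuous_on[OF g]])
  ultimately have "continuous_on U (\<lambda>x. (prod_right (f x) o\<^sub>L Dg x) + (prod_left (g x) o\<^sub>L Df x))"
    using Df Dg
    by (intro continuous_on_add bounded_bilinear.continuous_on[OF bounded_bilinear_blinfun_compose])
  with has_derivative_blinfun[OF Df(1) Dg(1)] show ?thesis by (rule C1_onI)
qed

lemma C1_on_compose:
  assumes g: "C1_on V g" and f: "C1_on U f" and "f ` U \<subseteq> V"
  shows "C1_on U (\<lambda>x. g (f x))"
proof -
  from f g obtain Df Dg
    where Df: "\<And>x. x \<in> U \<Longrightarrow> (f has_derivative blinfun_apply (Df x)) (at x)" "continuous_on U Df"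
      and Dg: "\<And>y. y \<in> V \<Longrightarrow> (g has_derivative blinfun_apply (Dg y)) (at y)" "continuous_on V Dg"
    by (metis C1_onE)
  have "continuous_on U (\<lambda>x. Dg (f x))"
    using continuous_on_compose[OF C1_on_imp_continuous_on[OF f] continuous_on_subset[OF Dg(2)]]
      \<open>f ` U \<subseteq> V\<close> by (simp add: o_def)
  then have "continuous_on U (\<lambda>x. Dg (f x) o\<^sub>L Df x)"
    by (rule bounded_bilinear.continuous_on[OF bounded_bilinear_blinfun_compose _ Df(2)])
  moreover have "((\<lambda>x. g (f x)) has_derivative Dg (f x) o\<^sub>L Df x) (at x)" if "x \<in> U" for x
    using that \<open>f ` U \<subseteq> V\<close> by (intro has_derivative_compose_blinfun Df Dg) auto
  ultimately show ?thesis by (intro C1_onI)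
qed

lemma C1_deriv_on_add:
  assumes "C1_deriv_on U f" "C1_deriv_on U g"
  shows "C1_deriv_on U (\<lambda>x. f x + g x)"
proof -
  from assms obtain Df Dg
    where "\<And>x. x \<in> U \<Longrightarrow> (f has_derivative blinfun_apply (Df x)) (at x)" "C1_on U Df"
      and "\<And>x. x \<in> U \<Longrightarrow> (g has_derivative blinfun_apply (Dg x)) (at x)" "C1_on U Dg"
    by (metis C1_deriv_onE)
  then show ?thesis
    by (intro C1_deriv_onI[of _ _ "\<lambda>x. Df x + Dg x"]) (auto intro: has_derivative_add_blinfun C1_on_add)
qed

lemma C1_deriv_on_bilinear:
  assumes "bounded_bilinear pr" and f: "C1_deriv_on U f" and g: "C1_deriv_on U g"
  shows "C1_deriv_on U (\<lambda>x. pr (f x) (g x))"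
proof -
  interpret bounded_bilinear pr by fact
  from f g obtain Df Dg
    where Df: "\<And>x. x \<in> U \<Longrightarrow> (f has_derivative blinfun_apply (Df x)) (at x)" "C1_on U Df"
      and Dg: "\<And>x. x \<in> U \<Longrightarrow> (g has_derivative blinfun_apply (Dg x)) (at x)" "C1_on U Dg"
    by (metis C1_deriv_onE)
  have "C1_on U (\<lambda>x. prod_right (f x))"
    by (rule C1_on_compose[OF C1_on_linear[OF bounded_linear_prod_right, of UNIV] C1_deriv_on_imp_C1_on[OF f]])
       simp
  moreover have "C1_on U (\<lambda>x. prod_left (g x))"
    by (rule C1_on_compose[OF C1_on_linear[OF bounded_linear_prod_left, of UNIV] C1_deriv_on_imp_C1_on[OF g]])
       simp
  ultimately have "C1_on U (\<lambda>x. (prod_right (f x) o\<^sub>L Dg x) + (prod_left (g x) o\<^sub>L Df x))"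
    by (intro C1_on_add C1_on_bilinear[OF bounded_bilinear_blinfun_compose] Df Dg)
  with has_derivative_blinfun[OF Df(1) Dg(1)] show ?thesis by (rule C1_deriv_onI)
qed

lemma C1_deriv_on_compose:
  assumes g: "C1_deriv_on V g" and f: "C1_deriv_on U f" and "f ` U \<subseteq> V"
  shows "C1_deriv_on U (\<lambda>x. g (f x))"
proof -
  from f g obtain Df Dg
    where Df: "\<And>x. x \<in> U \<Longrightarrow> (f has_derivative blinfun_apply (Df x)) (at x)" "C1_on U Df"
      and Dg: "\<And>y. y \<in> V \<Longrightarrow> (g has_derivative blinfun_apply (Dg y)) (at y)" "C1_on V Dg"
    by (metis C1_deriv_onE)
  have "C1_on U (\<lambda>x. Dg (f x))"
    by (rule C1_on_compose[OF Dg(2) C1_deriv_on_imp_C1_on[OF f] \<open>f ` U \<subseteq> V\<close>])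
  then have "C1_on U (\<lambda>x. Dg (f x) o\<^sub>L Df x)"
    by (intro C1_on_bilinear[OF bounded_bilinear_blinfun_compose] Df)
  moreover have "((\<lambda>x. g (f x)) has_derivative Dg (f x) o\<^sub>L Df x) (at x)" if "x \<in> U" for x
    using that \<open>f ` U \<subseteq> V\<close> by (intro has_derivative_compose_blinfun Df Dg) auto
  ultimately show ?thesis by (intro C1_deriv_onI)
qed

lemma C1_deriv_on_cong:
  assumes "open U" and "\<And>x. x \<in> U \<Longrightarrow> f x = g x" and "C1_deriv_on U g"
  shows "C1_deriv_on U f"
proof -
  from \<open>C1_deriv_on U g\<close> obtain Dg
    where Dg: "\<And>x. x \<in> U \<Longrightarrow> (g has_derivative blinfun_apply (Dg x)) (at x)" "C1_on U Dg"
    by (metis C1_deriv_onE)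
  have "(f has_derivative Dg x) (at x)" if "x \<in> U" for x
    by (rule has_derivative_transform_within_open[OF Dg(1) \<open>open U\<close>]) (use that assms in auto)
  then show ?thesis using Dg(2) by (rule C1_deriv_onI)
qed

lemma C1_on_real:
  assumes "\<And>x. x \<in> U \<Longrightarrow> (\<phi> has_real_derivative \<phi>' x) (at x)" and "continuous_on U \<phi>'"
  shows "C1_on U \<phi>"
proof (rule C1_onI)
  show "(\<phi> has_derivative blinfun_mult_right (\<phi>' x)) (at x)" if "x \<in> U" for x
    using assms(1)[OF that] by (simp add: has_field_derivative_imp_has_derivative)
  show "continuous_on U (\<lambda>x. blinfun_mult_right (\<phi>' x))"
    by (rule bounded_linear.continuous_on[OF bounded_linear_blinfun_mult_right assms(2)])
qed

lemma C1_deriv_on_real: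
  assumes "\<And>x. x \<in> U \<Longrightarrow> (\<phi> has_real_derivative \<phi>' x) (at x)"
    and "\<And>x. x \<in> U \<Longrightarrow> (\<phi>' has_real_derivative \<phi>'' x) (at x)" and "continuous_on U \<phi>''"
  shows "C1_deriv_on U \<phi>"
proof (rule C1_deriv_onI)
  show "(\<phi> has_derivative blinfun_mult_right (\<phi>' x)) (at x)" if "x \<in> U" for x
    using assms(1)[OF that] by (simp add: has_field_derivative_imp_has_derivative)
  show "C1_on U (\<lambda>x. blinfun_mult_right (\<phi>' x))"
    by (rule C1_on_compose[OF C1_on_linear[OF bounded_linear_blinfun_mult_right, of UNIV]
          C1_on_real[OF assms(2,3)]]) auto
qed

lemma C1_deriv_on_mult:
  fixes f g :: "'a::real_normed_vector \<Rightarrow> real"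
  shows "C1_deriv_on U f \<Longrightarrow> C1_deriv_on U g \<Longrightarrow> C1_deriv_on U (\<lambda>x. f x * g x)"
  by (rule C1_deriv_on_bilinear[OF bounded_bilinear_mult])

lemma C1_deriv_on_sum:
  "finite I \<Longrightarrow> (\<And>i. i \<in> I \<Longrightarrow> C1_deriv_on U (f i)) \<Longrightarrow> C1_deriv_on U (\<lambda>x. \<Sum>i\<in>I. f i x)"
  by (induction I rule: finite_induct) (auto intro: C1_deriv_on_const C1_deriv_on_add)

lemma C1_deriv_on_prod:
  fixes f :: "'i \<Rightarrow> 'a::real_normed_vector \<Rightarrow> real"
  shows "finite I \<Longrightarrow> (\<And>i. i \<in> I \<Longrightarrow> C1_deriv_on U (f i)) \<Longrightarrow> C1_deriv_on U (\<lambda>x. \<Prod>i\<in>I. f i x)"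
  by (induction I rule: finite_induct) (auto intro: C1_deriv_on_const C1_deriv_on_mult)

lemma C1_deriv_on_diff:
  assumes "C1_deriv_on U f" "C1_deriv_on U g"
  shows "C1_deriv_on U (\<lambda>x. f x - g x)"
proof -
  have "C1_deriv_on U (\<lambda>x. - g x)"
    by (rule C1_deriv_on_compose[OF C1_deriv_on_linear[OF bounded_linear_minus[OF bounded_linear_ident], of UNIV]
          assms(2)]) simp
  from C1_deriv_on_add[OF assms(1) this] show ?thesis by simp
qed

lemma C1_deriv_on_inverse: "C1_deriv_on {x::real. x \<noteq> 0} inverse"
proof (rule C1_deriv_on_real)
  fix x :: real assume "x \<in> {x. x \<noteq> 0}"
  then show "(inverse has_real_derivative - inverse (x\<^sup>2)) (at x)"
    and "((\<lambda>x. - inverse (x\<^sup>2)) has_real_derivative 2 * inverse (x ^ 3)) (at x)"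
    by (auto intro!: derivative_eq_intros simp: field_simps power2_eq_square power3_eq_cube)
qed (intro continuous_intros; simp)

lemma C1_deriv_on_divide:
  fixes f g :: "'a::real_normed_vector \<Rightarrow> real"
  assumes "C1_deriv_on U f" "C1_deriv_on U g" "\<And>x. x \<in> U \<Longrightarrow> g x \<noteq> 0"
  shows "C1_deriv_on U (\<lambda>x. f x / g x)"
proof -
  have "C1_deriv_on U (\<lambda>x. inverse (g x))"
    by (rule C1_deriv_on_compose[OF C1_deriv_on_inverse assms(2)]) (use assms(3) in auto)
  from C1_deriv_on_mult[OF assms(1) this] show ?thesis by (simp add: divide_inverse)
qed

lemma C1_deriv_on_sqrt: "C1_deriv_on {x::real. x > 0} sqrt"
proof (rule C1_deriv_on_real)
  fix x :: real assume "x \<in> {x. x > 0}"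
  then show "(sqrt has_real_derivative inverse (sqrt x) / 2) (at x)"
    and "((\<lambda>x. inverse (sqrt x) / 2) has_real_derivative - inverse (sqrt x ^ 3) / 4) (at x)"
    by (auto intro!: derivative_eq_intros simp: field_simps power3_eq_cube)
qed (intro continuous_intros; simp)

section \<open>Matrix powers and the spectral radius\<close>

lemma matrix_diff_rdistrib: "(A - B) ** C = A ** C - B ** (C::'a::ring_1^'n^'m)"
  by (simp add: vec_eq_iff matrix_matrix_mult_def sum_subtractf left_diff_distrib)

lemma matrix_diff_ldistrib: "A ** (B - C) = A ** B - A ** (C::'a::ring_1^'n^'m)"
  by (simp add: vec_eq_iff matrix_matrix_mult_def sum_subtractf right_diff_distrib)

lemma transpose_add: "transpose (A + B) = transpose A + transpose (B::'a::semiring_1^'n^'m)"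
  by (simp add: vec_eq_iff transpose_def)

definition cramer_mat :: "'a^'n^'n \<Rightarrow> 'a^'n \<Rightarrow> 'n \<Rightarrow> 'a^'n^'n" where
  "cramer_mat A b k = (\<chi> i j. if j = k then b $ i else A $ i $ j)"

lemma cramer_mat_iff:
  fixes A :: "'a::field^'n^'n"
  shows "det A \<noteq> 0 \<Longrightarrow> A *v x = b \<longleftrightarrow> x = (\<chi> k. det (cramer_mat A b k) / det A)"
  unfolding cramer_mat_def by (rule cramer)

fun matpow :: "'a::semiring_1^'n^'n \<Rightarrow> nat \<Rightarrow> 'a^'n^'n" where
  "matpow M 0 = mat 1"
| "matpow M (Suc k) = M ** matpow M k"

lemma cmat_mult: "cmat (A ** B) = cmat A ** cmat B"
  by (simp add: cmat_def matrix_matrix_mult_def vec_eq_iff)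

lemma cmat_mat: "cmat (mat c) = mat (complex_of_real c)"
  by (simp add: cmat_def mat_def vec_eq_iff)

lemma cmat_matpow: "cmat (matpow M k) = matpow (cmat M) k"
  by (induction k) (simp_all add: cmat_mat cmat_mult)

lemma sum_mat_mult_left: "(\<Sum>k\<in>UNIV. (mat c :: 'a::semiring_1^'n^'n) $ i $ k * f k) = c * f i"
proof -
  have "(mat c :: 'a^'n^'n) $ i $ k * f k = (if k = i then c * f i else 0)" for k
    by (auto simp: mat_def)
  then show ?thesis by simp
qed

lemma mat_mult_nth: "(mat c ** (A::'a::semiring_1^'m^'n)) $ i $ j = c * A $ i $ j"
  by (simp add: matrix_matrix_mult_def sum_mat_mult_left)

definition entrywise_norm :: "'a::real_normed_vector^'n^'m \<Rightarrow> real" where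
  "entrywise_norm C = (\<Sum>a\<in>UNIV. \<Sum>b\<in>UNIV. norm (C $ a $ b))"

lemma entrywise_norm_nonneg: "entrywise_norm C \<ge> 0"
  unfolding entrywise_norm_def by (intro sum_nonneg) auto

lemma row_norm_le_entrywise_norm: "(\<Sum>b\<in>UNIV. norm (C $ a $ b)) \<le> entrywise_norm C"
  unfolding entrywise_norm_def
  by (rule member_le_sum[of a UNIV "\<lambda>a. \<Sum>b\<in>UNIV. norm (C $ a $ b)"]) (auto intro: sum_nonneg)

lemma matpow_nth_norm_le: "cmod (matpow C k $ i $ j) \<le> entrywise_norm C ^ k"
proof (induction k arbitrary: i j)
  case 0
  then show ?case by (simp add: mat_def)
next
  case (Suc k)
  have "cmod (matpow C (Suc k) $ i $ j) = cmod (\<Sum>c\<in>UNIV. C $ i $ c * matpow C k $ c $ j)"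
    by (simp add: matrix_matrix_mult_def)
  also have "\<dots> \<le> (\<Sum>c\<in>UNIV. cmod (C $ i $ c) * cmod (matpow C k $ c $ j))"
    by (rule order_trans[OF norm_sum]) (simp add: norm_mult)
  also have "\<dots> \<le> (\<Sum>c\<in>UNIV. cmod (C $ i $ c) * entrywise_norm C ^ k)"
    by (intro sum_mono mult_left_mono Suc.IH) auto
  also have "\<dots> = (\<Sum>c\<in>UNIV. cmod (C $ i $ c)) * entrywise_norm C ^ k"
    by (simp add: sum_distrib_right)
  also have "\<dots> \<le> entrywise_norm C * entrywise_norm C ^ k"
    by (intro mult_right_mono row_norm_le_entrywise_norm) (simp add: entrywise_norm_nonneg)
  finally show ?case by simp
qed

lemma neumann_series_summable:
  fixes C :: "complex^'n^'n"
  assumes "cmod z * entrywise_norm C < 1"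
  shows "summable (\<lambda>n. z ^ n * matpow C n $ a $ b)"
proof (rule summable_comparison_test'[where g = "\<lambda>n. (cmod z * entrywise_norm C) ^ n"])
  show "summable (\<lambda>n. (cmod z * entrywise_norm C) ^ n)"
    using assms entrywise_norm_nonneg[of C] by (intro summable_geometric) simp
  show "norm (z ^ n * matpow C n $ a $ b) \<le> (cmod z * entrywise_norm C) ^ n" for n
    using matpow_nth_norm_le[of C n a b]
    by (simp add: norm_mult norm_power power_mult_distrib mult_left_mono)
qed

lemma neumann_series_inverse:
  fixes C :: "complex^'n^'n"
  assumes "cmod z * entrywise_norm C < 1"
  shows "(mat 1 - mat z ** C) ** (\<chi> a b. \<Sum>n. z ^ n * matpow C n $ a $ b) = mat 1"
proof -
  let ?S = "(\<chi> a b. \<Sum>n. z ^ n * matpow C n $ a $ b) :: complex^'n^'n"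
  note sm = neumann_series_summable[OF assms]
  have sm_Suc: "summable (\<lambda>n. z ^ n * matpow C (Suc n) $ i $ j)" for i j
  proof -
    have "summable (\<lambda>n. \<Sum>k\<in>UNIV. C $ i $ k * (z ^ n * matpow C n $ k $ j))"
      by (intro summable_sum summable_mult sm)
    then show ?thesis by (simp add: matrix_matrix_mult_def sum_distrib_left algebra_simps)
  qed
  have "(C ** ?S) $ i $ j = (\<Sum>n. z ^ n * matpow C (Suc n) $ i $ j)" for i j
  proof -
    have "(C ** ?S) $ i $ j = (\<Sum>k\<in>UNIV. \<Sum>n. C $ i $ k * (z ^ n * matpow C n $ k $ j))"
      by (simp add: matrix_matrix_mult_def suminf_mult[OF sm])
    also have "\<dots> = (\<Sum>n. \<Sum>k\<in>UNIV. C $ i $ k * (z ^ n * matpow C n $ k $ j))"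
      by (rule suminf_sum[symmetric]) (intro summable_mult sm)
    also have "\<dots> = (\<Sum>n. z ^ n * matpow C (Suc n) $ i $ j)"
      by (intro suminf_cong) (simp add: matrix_matrix_mult_def sum_distrib_left algebra_simps)
    finally show ?thesis .
  qed
  moreover have "z * (\<Sum>n. z ^ n * matpow C (Suc n) $ i $ j) = ?S $ i $ j - mat 1 $ i $ j" for i j
  proof -
    have "z * (\<Sum>n. z ^ n * matpow C (Suc n) $ i $ j) = (\<Sum>n. z ^ Suc n * matpow C (Suc n) $ i $ j)"
      by (subst suminf_mult[symmetric]) (use sm_Suc in \<open>auto simp: algebra_simps\<close>)
    also have "\<dots> = ?S $ i $ j - mat 1 $ i $ j"
      using suminf_split_head[OF sm[of i j]] by simp
    finally show ?thesis .
  qed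
  ultimately have "mat z ** C ** ?S = ?S - mat 1"
    by (simp add: vec_eq_iff mat_mult_nth matrix_mul_assoc[symmetric])
  then show ?thesis by (simp add: matrix_diff_rdistrib)
qed

text \<open>Entry \<open>(i, j)\<close> of \<open>(I - z C)\<inverse>\<close>, written by Cramer's rule so that it is visibly holomorphic
  wherever \<open>I - z C\<close> is invertible.\<close>
definition resolvent_entry :: "complex^'n^'n \<Rightarrow> 'n \<Rightarrow> 'n \<Rightarrow> complex \<Rightarrow> complex" where
  "resolvent_entry C i j z = det (cramer_mat (mat 1 - mat z ** C) (axis j 1) i) / det (mat 1 - mat z ** C)"

lemma holomorphic_on_det:
  "(\<And>a b. (\<lambda>z. F z $ a $ b) holomorphic_on S) \<Longrightarrow> (\<lambda>z. det (F z)) holomorphic_on S"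
  unfolding det_def by (intro holomorphic_intros)

lemma resolvent_entry_holomorphic_on:
  assumes "\<And>z. z \<in> S \<Longrightarrow> det (mat 1 - mat z ** C) \<noteq> 0"
  shows "resolvent_entry C i j holomorphic_on S"
proof -
  have entries: "(\<lambda>z. (mat 1 - mat z ** C) $ a $ b) holomorphic_on S" for a b
    by (auto simp: mat_mult_nth intro!: holomorphic_intros)
  have "(\<lambda>z. cramer_mat (mat 1 - mat z ** C) (axis j 1) i $ a $ b) holomorphic_on S" for a b
    by (cases "b = i") (auto simp: cramer_mat_def mat_mult_nth intro!: holomorphic_intros)
  then show ?thesis
    unfolding resolvent_entry_def by (intro holomorphic_on_divide holomorphic_on_det assms entries)
qed

lemma resolvent_entry_eq_suminf:
  fixes C :: "complex^'n^'n"
  assumes "cmod z * entrywise_norm C < 1"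
  shows "resolvent_entry C i j z = (\<Sum>n. matpow C n $ i $ j * z ^ n)"
proof -
  let ?S = "(\<chi> a b. \<Sum>n. z ^ n * matpow C n $ a $ b) :: complex^'n^'n"
  have inv: "(mat 1 - mat z ** C) ** ?S = mat 1"
    by (rule neumann_series_inverse[OF assms])
  then have "det (mat 1 - mat z ** C) * det ?S = 1"
    by (simp only: det_mul[symmetric] inv det_I)
  then have det: "det (mat 1 - mat z ** C) \<noteq> 0" by auto
  have "(mat 1 - mat z ** C) *v column j ?S = axis j 1"
    using arg_cong[OF inv, of "column j"]
    by (simp add: vec_eq_iff matrix_vector_mult_def matrix_matrix_mult_def column_def mat_def axis_def)
  then have "column j ?S $ i = resolvent_entry C i j z"
    unfolding cramer_mat_iff[OF det] resolvent_entry_def by simp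
  then show ?thesis by (simp add: column_def mult.commute)
qed

lemma resolvent_entry_has_fps_expansion:
  "resolvent_entry C i j has_fps_expansion Abs_fps (\<lambda>n. matpow C n $ i $ j)"
proof -
  define \<rho> where "\<rho> = 1 / (entrywise_norm C + 1)"
  have \<rho>: "\<rho> > 0" using entrywise_norm_nonneg[of C] by (simp add: \<rho>_def)
  have small: "cmod z * entrywise_norm C < 1" if "cmod z < \<rho>" for z
  proof -
    have "cmod z * entrywise_norm C \<le> cmod z * (entrywise_norm C + 1)"
      by (simp add: mult_left_mono)
    also have "\<dots> < 1" using that entrywise_norm_nonneg[of C] by (simp add: \<rho>_def field_simps)
    finally show ?thesis .
  qed
  have "summable (\<lambda>n. fps_nth (Abs_fps (\<lambda>n. matpow C n $ i $ j)) n * of_real (\<rho> / 2) ^ n)"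
    using neumann_series_summable[OF small[of "of_real (\<rho> / 2)"]] \<rho> by (simp add: mult.commute)
  from conv_radius_geI[OF this] have "fps_conv_radius (Abs_fps (\<lambda>n. matpow C n $ i $ j)) \<ge> \<rho> / 2"
    using \<rho> by (simp add: fps_conv_radius_def)
  with \<rho> have "fps_conv_radius (Abs_fps (\<lambda>n. matpow C n $ i $ j)) > 0"
    by (metis ereal_less(2) half_gt_zero order_less_le_trans zero_ereal_def)
  moreover have "eventually (\<lambda>z. z \<in> ball 0 \<rho>) (nhds (0::complex))"
    using \<rho> by (intro eventually_nhds_in_open) auto
  then have "eventually (\<lambda>z. eval_fps (Abs_fps (\<lambda>n. matpow C n $ i $ j)) z = resolvent_entry C i j z)
      (nhds 0)"
    by eventually_elim (simp add: small resolvent_entry_eq_suminf eval_fps_def)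
  ultimately show ?thesis unfolding has_fps_expansion_def by simp
qed

lemma det_id_minus_scaled_nonzero:
  fixes C :: "complex^'n^'n"
  assumes "\<And>l. det (mat l - C) = 0 \<Longrightarrow> cmod l * cmod z < 1"
  shows "det (mat 1 - mat z ** C) \<noteq> 0"
proof (cases "z = 0")
  case True
  then show ?thesis by simp
next
  case False
  have "mat 1 - mat z ** C = mat z ** (mat (1 / z) - C)"
    using False by (simp add: vec_eq_iff mat_mult_nth) (simp add: mat_def right_diff_distrib)
  then have "det (mat 1 - mat z ** C) = z ^ CARD('n) * det (mat (1 / z) - C)"
    by (simp add: det_mul det_diagonal mat_def)
  moreover have "det (mat (1 / z) - C) \<noteq> 0"
    using assms[of "1 / z"] False by (auto simp: norm_divide)
  ultimately show ?thesis using False by simp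
qed

lemma matpow_nth_summable:
  fixes C :: "complex^'n^'n"
  assumes "r < 1" and "\<And>l. det (mat l - C) = 0 \<Longrightarrow> cmod l \<le> r"
  shows "summable (\<lambda>k. matpow C k $ i $ j)"
proof -
  define R where "R = 2 / (max r 0 + 1)"
  have "R > 1" using \<open>r < 1\<close> by (simp add: R_def field_simps)
  have "det (mat 1 - mat z ** C) \<noteq> 0" if "z \<in> ball 0 R" for z
  proof (rule det_id_minus_scaled_nonzero)
    fix l assume "det (mat l - C) = 0"
    then have "cmod l \<le> max r 0" using assms(2) by fastforce
    then have "cmod l * cmod z \<le> max r 0 * R"
      using that by (intro mult_mono) auto
    also have "\<dots> < 1"
      using \<open>r < 1\<close> by (simp add: R_def field_simps max_def)
    finally show "cmod l * cmod z < 1" .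
  qed
  then have "resolvent_entry C i j holomorphic_on ball 0 R"
    by (rule resolvent_entry_holomorphic_on)
  from holomorphic_power_series[OF this, of 1] \<open>R > 1\<close>
  have "(\<lambda>n. (deriv ^^ n) (resolvent_entry C i j) 0 / fact n) sums resolvent_entry C i j 1"
    by simp
  also have "(\<lambda>n. (deriv ^^ n) (resolvent_entry C i j) 0 / fact n) = (\<lambda>n. matpow C n $ i $ j)"
    using fps_nth_fps_expansion[OF resolvent_entry_has_fps_expansion, of C i j] by simp
  finally show ?thesis by (rule sums_summable)
qed

definition charpoly :: "'a::comm_ring_1^'n^'n \<Rightarrow> 'a poly" where
  "charpoly C = (\<Sum>p\<in>{p. p permutes (UNIV::'n set)}.
      smult (of_int (sign p)) (\<Prod>i\<in>UNIV. [:- C $ i $ p i, if i = p i then 1 else 0:]))"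

lemma poly_charpoly: "poly (charpoly C) l = det (mat l - C)"
proof -
  have "poly [:- c, if b then 1 else 0:] l = (if b then l else 0) - c" for b and c :: 'a
    by simp
  then show ?thesis unfolding charpoly_def det_def by (simp add: poly_sum poly_prod mat_def)
qed

lemma coeff_charpoly_CARD: "coeff (charpoly (C::'a::idom^'n^'n)) CARD('n) = 1"
proof -
  let ?f = "\<lambda>p. \<Prod>i\<in>UNIV. [:- C $ i $ p i, if i = p i then 1 else 0:]"
  have "degree (?f id) = CARD('n)"
    by (subst degree_prod_eq_sum_degree) auto
  moreover have "lead_coeff (?f id) = 1"
    by (simp add: lead_coeff_prod)
  ultimately have id: "coeff (?f id) CARD('n) = 1" by simp
  have other: "coeff (?f p) CARD('n) = 0" if "p \<noteq> id" for p
  proof -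
    from that obtain i0 where i0: "p i0 \<noteq> i0" by (metis eq_id_iff)
    have "degree (?f p) \<le> (\<Sum>i\<in>UNIV. (degree \<circ> (\<lambda>i. [:- C $ i $ p i, if i = p i then 1 else 0:])) i)"
      by (rule degree_prod_sum_le) simp
    also have "\<dots> < (\<Sum>i\<in>(UNIV::'n set). 1)"
      by (rule sum_strict_mono_ex1) (use i0 in \<open>auto intro!: exI[of _ i0]\<close>)
    finally show ?thesis by (simp add: coeff_eq_0)
  qed
  have "coeff (charpoly C) CARD('n) = (\<Sum>p | p permutes UNIV. of_int (sign p) * coeff (?f p) CARD('n))"
    unfolding charpoly_def by (simp add: coeff_sum)
  also have "\<dots> = of_int (sign (id::'n \<Rightarrow> 'n)) * coeff (?f id) CARD('n)"
    by (rule sum.remove[of _ id, THEN trans]) (auto simp: other permutes_id)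
  also have "\<dots> = 1" using id by (simp add: sign_id)
  finally show ?thesis .
qed

lemma finite_eigenvalues: "finite {l. det (mat l - (C::'a::idom^'n^'n)) = 0}"
proof -
  have "charpoly C \<noteq> 0" using coeff_charpoly_CARD[of C] by auto
  from poly_roots_finite[OF this] show ?thesis by (simp add: poly_charpoly)
qed

lemma eigenvalue_exists: "\<exists>l. det (mat l - (C::complex^'n^'n)) = 0"
proof -
  have "CARD('n) \<le> degree (charpoly C)"
    by (rule le_degree) (simp add: coeff_charpoly_CARD)
  with finite_UNIV_card_ge_0 have "degree (charpoly C) \<noteq> 0"
    by (metis finite_class.finite_UNIV not_gr0 order.strict_trans2)
  then have "\<not> constant (poly (charpoly C))"
    by (simp add: constant_degree)
  from fundamental_theorem_of_algebra[OF this] show ?thesis by (auto simp: poly_charpoly)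
qed

lemma eigenvalue_norm_le_spec_rad: "det (mat l - cmat M) = 0 \<Longrightarrow> cmod l \<le> spec_rad M"
  unfolding spec_rad_def using finite_eigenvalues[of "cmat M"] by (intro Max_ge) auto

lemma spec_rad_less_1_iff: "spec_rad M < 1 \<longleftrightarrow> (\<forall>l. det (mat l - cmat M) = 0 \<longrightarrow> cmod l < 1)"
proof
  assume "spec_rad M < 1"
  then show "\<forall>l. det (mat l - cmat M) = 0 \<longrightarrow> cmod l < 1"
    using eigenvalue_norm_le_spec_rad by fastforce
next
  assume "\<forall>l. det (mat l - cmat M) = 0 \<longrightarrow> cmod l < 1"
  moreover have "spec_rad M \<in> {cmod l | l. det (mat l - cmat M) = 0}"
    unfolding spec_rad_def using finite_eigenvalues[of "cmat M"] eigenvalue_exists[of "cmat M"]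
    by (intro Max_in) auto
  ultimately show "spec_rad M < 1" by auto
qed

lemma matpow_nth_tendsto_0:
  assumes "spec_rad M < 1"
  shows "(\<lambda>k. matpow M k $ i $ j) \<longlonglongrightarrow> 0"
proof -
  have "(\<lambda>k. matpow (cmat M) k $ i $ j) \<longlonglongrightarrow> 0"
    by (rule summable_LIMSEQ_zero[OF matpow_nth_summable[OF assms]])
       (auto intro: eigenvalue_norm_le_spec_rad)
  moreover have "matpow (cmat M) k $ i $ j = complex_of_real (matpow M k $ i $ j)" for k
    by (simp only: cmat_matpow[symmetric]) (simp add: cmat_def)
  ultimately have "(\<lambda>k. complex_of_real (matpow M k $ i $ j)) \<longlonglongrightarrow> of_real 0"
    by simp
  then show ?thesis by (simp only: tendsto_of_real_iff)
qed

lemma det_eq_0_imp_kernel: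
  fixes A :: "'a::field^'n^'n"
  assumes "det A = 0"
  shows "\<exists>x. x \<noteq> 0 \<and> A *v x = 0"
  using assms invertible_det_nz invertible_left_inverse matrix_left_invertible_ker by metis

lemma eigenvalue_norm_le_entrywise_norm:
  fixes C :: "complex^'n^'n"
  assumes "det (mat l - C) = 0"
  shows "cmod l \<le> entrywise_norm C"
proof -
  obtain x where "x \<noteq> 0" and x: "(mat l - C) *v x = 0"
    using det_eq_0_imp_kernel[OF assms] by blast
  obtain i where i: "\<And>k. cmod (x $ k) \<le> cmod (x $ i)"
  proof -
    have "Max (range (\<lambda>k. cmod (x $ k))) \<in> range (\<lambda>k. cmod (x $ k))" by (rule Max_in) auto
    then obtain i where "Max (range (\<lambda>k. cmod (x $ k))) = cmod (x $ i)" by blast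
    moreover have "cmod (x $ k) \<le> Max (range (\<lambda>k. cmod (x $ k)))" for k by (rule Max_ge) auto
    ultimately show ?thesis using that by metis
  qed
  have "cmod (x $ i) > 0"
  proof (rule ccontr)
    assume "\<not> cmod (x $ i) > 0"
    then have "x $ k = 0" for k using i[of k] by simp
    then show False using \<open>x \<noteq> 0\<close> by (simp add: vec_eq_iff)
  qed
  have "l * x $ i = (\<Sum>k\<in>UNIV. C $ i $ k * x $ k)"
    using arg_cong[OF x, of "\<lambda>v. v $ i"]
    by (simp add: matrix_vector_mult_def sum_subtractf left_diff_distrib sum_mat_mult_left)
  then have "cmod l * cmod (x $ i) = cmod (\<Sum>k\<in>UNIV. C $ i $ k * x $ k)" by (metis norm_mult)
  also have "\<dots> \<le> (\<Sum>k\<in>UNIV. cmod (C $ i $ k) * cmod (x $ i))"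
    by (rule order_trans[OF norm_sum]) (auto simp: norm_mult intro!: sum_mono mult_left_mono i)
  also have "\<dots> = (\<Sum>k\<in>UNIV. cmod (C $ i $ k)) * cmod (x $ i)" by (simp add: sum_distrib_right)
  finally have "cmod l \<le> (\<Sum>k\<in>UNIV. cmod (C $ i $ k))" using \<open>cmod (x $ i) > 0\<close> by simp
  also have "\<dots> \<le> entrywise_norm C" by (rule row_norm_le_entrywise_norm)
  finally show ?thesis .
qed

lemma tendsto_det:
  fixes X :: "'b \<Rightarrow> 'a::real_normed_field^'n^'n"
  shows "(X \<longlongrightarrow> Y) F \<Longrightarrow> ((\<lambda>x. det (X x)) \<longlongrightarrow> det Y) F"
  unfolding det_def by (intro tendsto_intros tendsto_vec_nth)

lemma tendsto_cmat: "(X \<longlongrightarrow> M) F \<Longrightarrow> ((\<lambda>x. cmat (X x)) \<longlongrightarrow> cmat M) F"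
  unfolding cmat_def by (intro tendsto_vec_lambda tendsto_of_real tendsto_vec_nth)

text \<open>Eigenvalues of a convergent sequence of matrices stay bounded, so a subsequence of them
  converges, and its limit is an eigenvalue of the limit matrix.\<close>
lemma closed_eigenvalue_outside_unit_disc:
  "closed {M::real^'n^'n. \<exists>l. det (mat l - cmat M) = 0 \<and> 1 \<le> cmod l}"
  unfolding closed_sequential_limits
proof (intro allI impI, elim conjE)
  fix X :: "nat \<Rightarrow> real^'n^'n" and M
  assume "\<forall>n. X n \<in> {M. \<exists>l. det (mat l - cmat M) = 0 \<and> 1 \<le> cmod l}" and "X \<longlonglongrightarrow> M"
  then obtain l where l: "\<And>n. det (mat (l n) - cmat (X n)) = 0" "\<And>n. 1 \<le> cmod (l n)"
    by (auto simp: choice_iff)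
  have "(\<lambda>n. entrywise_norm (cmat (X n))) \<longlonglongrightarrow> entrywise_norm (cmat M)"
    unfolding entrywise_norm_def
    by (intro tendsto_sum tendsto_norm tendsto_vec_nth tendsto_cmat \<open>X \<longlonglongrightarrow> M\<close>)
  then obtain b where "\<And>n. norm (entrywise_norm (cmat (X n))) \<le> b"
    by (metis BseqE convergent_imp_Bseq convergentI)
  then have "l n \<in> cball 0 b \<inter> {z. 1 \<le> cmod z}" for n
    using eigenvalue_norm_le_entrywise_norm[OF l(1)[of n]] l(2)[of n]
    by (auto simp: dist_norm intro: order_trans[OF _ order_trans[OF abs_ge_self]])
  moreover have "compact (cball 0 b \<inter> {z. 1 \<le> cmod z})"
    by (intro compact_Int_closed compact_cball closed_Collect_le continuous_intros)
  ultimately obtain l0 r where l0: "l0 \<in> cball 0 b \<inter> {z. 1 \<le> cmod z}"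
    and "strict_mono r" and "(l \<circ> r) \<longlonglongrightarrow> l0"
    by (metis compact_imp_seq_compact seq_compactE)
  have "(\<lambda>n. det (mat (l (r n)) - cmat (X (r n)))) \<longlonglongrightarrow> det (mat l0 - cmat M)"
  proof (intro tendsto_det tendsto_diff tendsto_cmat)
    show "(\<lambda>n. mat (l (r n))) \<longlonglongrightarrow> mat l0"
      using \<open>(l \<circ> r) \<longlonglongrightarrow> l0\<close>
      unfolding mat_def by (intro tendsto_vec_lambda) (auto simp: o_def)
    show "(\<lambda>n. X (r n)) \<longlonglongrightarrow> M"
      using LIMSEQ_subseq_LIMSEQ[OF \<open>X \<longlonglongrightarrow> M\<close> \<open>strict_mono r\<close>] by (simp add: o_def)
  qed
  then have "det (mat l0 - cmat M) = 0"
    using l(1) by (simp add: LIMSEQ_const_iff)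
  with l0 show "M \<in> {M. \<exists>l. det (mat l - cmat M) = 0 \<and> 1 \<le> cmod l}" by auto
qed

lemma open_spec_rad_less_1: "open {M::real^'n^'n. spec_rad M < 1}"
proof -
  have "{M::real^'n^'n. spec_rad M < 1} = - {M. \<exists>l. det (mat l - cmat M) = 0 \<and> 1 \<le> cmod l}"
    by (auto simp: spec_rad_less_1_iff not_less)
  then show ?thesis using open_Compl[OF closed_eigenvalue_outside_unit_disc] by simp
qed

section \<open>Positive semidefinite matrices\<close>

lemma inner_matrix_vector: "(v::real^'n) \<bullet> (M *v y) = (transpose M *v v) \<bullet> y"
  by (simp add: dot_lmul_matrix)

lemma inner_congruence:
  "(v::real^'n) \<bullet> ((M ** X ** transpose M) *v v) = (transpose M *v v) \<bullet> (X *v (transpose M *v v))"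
proof -
  have "(M ** X ** transpose M) *v v = M *v (X *v (transpose M *v v))"
    by (simp only: matrix_vector_mul_assoc matrix_mul_assoc)
  then show ?thesis by (simp only: inner_matrix_vector)
qed

lemma psd_add: "psd_mat X \<Longrightarrow> psd_mat Y \<Longrightarrow> psd_mat (X + Y)"
  unfolding psd_mat_def
  by (auto simp: transpose_add matrix_vector_mult_add_rdistrib inner_add_right add_nonneg_nonneg)

lemma psd_congruence:
  fixes B :: "real^'p^'n"
  assumes "psd_mat S"
  shows "psd_mat (B ** S ** transpose B)"
  using assms unfolding psd_mat_def
  by (auto simp: matrix_transpose_mul matrix_mul_assoc inner_congruence simp del: transpose_matrix_vector)

lemma matrix_vector_axis_nth: "((S::real^'n^'n) *v axis j 1) $ r = S $ r $ j"
  by (simp add: matrix_vector_mult_basis column_def)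

lemma quadratic_form_add_scaled:
  fixes S :: "real^'n^'n"
  assumes "transpose S = S"
  shows "(t *\<^sub>R a + b) \<bullet> (S *v (t *\<^sub>R a + b))
    = t\<^sup>2 * (a \<bullet> (S *v a)) + 2 * t * (a \<bullet> (S *v b)) + b \<bullet> (S *v b)"
proof -
  have "b \<bullet> (S *v a) = a \<bullet> (S *v b)"
    using inner_matrix_vector[of b S a] assms by (simp add: inner_commute del: transpose_matrix_vector)
  then show ?thesis
    by (simp add: matrix_vector_right_distrib matrix_vector_mult_scaleR inner_add_left
        inner_add_right power2_eq_square algebra_simps)
qed

lemma psd_diag_nonneg:
  assumes "psd_mat S"
  shows "S $ i $ i \<ge> 0"
proof -
  have "axis i 1 \<bullet> (S *v axis i 1) = S $ i $ i"
    by (simp add: inner_axis' matrix_vector_axis_nth)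
  with assms show ?thesis unfolding psd_mat_def by metis
qed

lemma psd_zero_diag_imp_zero:
  fixes S :: "real^'n^'n"
  assumes "psd_mat S" and "S $ i $ i = 0"
  shows "S $ i $ j = 0"
proof (rule ccontr)
  assume "S $ i $ j \<noteq> 0"
  define t where "t = - (S $ j $ j + 1) / (2 * S $ i $ j)"
  have "(t *\<^sub>R axis i 1 + axis j 1) \<bullet> (S *v (t *\<^sub>R axis i 1 + axis j 1))
      = t\<^sup>2 * S $ i $ i + 2 * t * S $ i $ j + S $ j $ j"
    using assms(1) unfolding psd_mat_def
    by (simp add: quadratic_form_add_scaled inner_axis' matrix_vector_axis_nth)
  also have "\<dots> = -1" using \<open>S $ i $ j \<noteq> 0\<close> assms(2) by (simp add: t_def field_simps)
  moreover have "(t *\<^sub>R axis i 1 + axis j 1) \<bullet> (S *v (t *\<^sub>R axis i 1 + axis j 1)) \<ge> 0"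
    using assms(1) by (simp add: psd_mat_def)
  ultimately show False by simp
qed

lemma psd_schur_complement:
  fixes S :: "real^'n^'n"
  assumes S: "psd_mat S" and d: "S $ i $ i > 0"
  shows "psd_mat (\<chi> r c. S $ r $ c - S $ r $ i * S $ c $ i / S $ i $ i)"
proof -
  have sym: "transpose S = S" using S by (simp add: psd_mat_def)
  have symE: "S $ a $ b = S $ b $ a" for a b
    by (subst sym[symmetric]) (simp add: transpose_def)
  have "x \<bullet> ((\<chi> r c. S $ r $ c - S $ r $ i * S $ c $ i / S $ i $ i) *v x) \<ge> 0" for x
  proof -
    define y where "y = (S *v x) $ i"
    have y: "y = (\<Sum>c\<in>UNIV. S $ c $ i * x $ c)"
      by (simp add: y_def matrix_vector_mult_def symE)
    have "x \<bullet> ((\<chi> r c. S $ r $ c - S $ r $ i * S $ c $ i / S $ i $ i) *v x)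
        = (\<Sum>r\<in>UNIV. x $ r * (\<Sum>c\<in>UNIV. S $ r $ c * x $ c))
          - (\<Sum>r\<in>UNIV. \<Sum>c\<in>UNIV. (x $ r * S $ r $ i) * (S $ c $ i * x $ c)) / S $ i $ i"
      by (simp add: inner_vec_def matrix_vector_mult_def left_diff_distrib right_diff_distrib
          sum_subtractf sum_distrib_left sum_divide_distrib mult_ac)
    also have "(\<Sum>r\<in>UNIV. \<Sum>c\<in>UNIV. (x $ r * S $ r $ i) * (S $ c $ i * x $ c)) = y * y"
      unfolding y by (simp add: sum_product mult.commute)
    also have "(\<Sum>r\<in>UNIV. x $ r * (\<Sum>c\<in>UNIV. S $ r $ c * x $ c)) = x \<bullet> (S *v x)"
      by (simp add: inner_vec_def matrix_vector_mult_def)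
    also have "x \<bullet> (S *v x) - y * y / S $ i $ i = (- y / S $ i $ i)\<^sup>2 * S $ i $ i + 2 * (- y / S $ i $ i) * y + x \<bullet> (S *v x)"
      using d by (simp add: field_simps power2_eq_square)
    also have "\<dots> = ((- y / S $ i $ i) *\<^sub>R axis i 1 + x) \<bullet> (S *v ((- y / S $ i $ i) *\<^sub>R axis i 1 + x))"
      by (simp only: quadratic_form_add_scaled[OF sym]) (simp add: inner_axis' matrix_vector_axis_nth y_def)
    finally show ?thesis using S unfolding psd_mat_def by simp
  qed
  moreover have "transpose (\<chi> r c. S $ r $ c - S $ r $ i * S $ c $ i / S $ i $ i)
      = (\<chi> r c. S $ r $ c - S $ r $ i * S $ c $ i / S $ i $ i)"
    by (simp add: transpose_def vec_eq_iff symE mult.commute)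
  ultimately show ?thesis unfolding psd_mat_def by blast
qed

definition replace_column :: "'n \<Rightarrow> 'a^'m \<Rightarrow> 'a^'n^'m \<Rightarrow> 'a^'n^'m" where
  "replace_column k u L = (\<chi> r c. if c = k then u $ r else L $ r $ c)"

lemma gram_replace_zero_column:
  fixes L :: "real^'n^'m"
  assumes "\<And>r. L $ r $ k = 0"
  shows "replace_column k u L ** transpose (replace_column k u L) = (\<chi> r s. u $ r * u $ s) + L ** transpose L"
proof -
  have "replace_column k u L $ r $ c * replace_column k u L $ s $ c
      = (if c = k then u $ r * u $ s else 0) + L $ r $ c * L $ s $ c" for r s c
    using assms by (simp add: replace_column_def)
  then show ?thesis
    by (simp add: vec_eq_iff matrix_matrix_mult_def transpose_def sum.distrib)
qed

lemma psd_factor_supported: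
  fixes S :: "real^'n^'n"
  assumes "finite I" and "psd_mat S" and "\<And>i. i \<notin> I \<Longrightarrow> S $ i $ i = 0"
  shows "\<exists>L::real^'n^'n. L ** transpose L = S \<and> (\<forall>r c. c \<notin> I \<longrightarrow> L $ r $ c = 0)"
  using assms(1,2,3)
proof (induction I arbitrary: S rule: finite_induct)
  case empty
  have "S $ i $ j = 0" for i j
    by (rule psd_zero_diag_imp_zero[OF empty.prems(1) empty.prems(2)]) simp
  then have "S = 0" by (simp add: vec_eq_iff)
  then show ?case by (intro exI[of _ 0]) simp
next
  case (insert i0 I)
  show ?case
  proof (cases "S $ i0 $ i0 = 0")
    case True
    have "S $ i $ i = 0" if "i \<notin> I" for i
      using True insert.prems(2)[of i] that by (cases "i = i0") auto
    with insert.IH[OF insert.prems(1)] show ?thesis by auto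
  next
    case False
    define d where "d = S $ i0 $ i0"
    have "d > 0" using False psd_diag_nonneg[OF insert.prems(1), of i0] by (simp add: d_def)
    define S' where "S' = (\<chi> r c. S $ r $ c - S $ r $ i0 * S $ c $ i0 / d)"
    have "psd_mat S'"
      unfolding S'_def d_def using psd_schur_complement[OF insert.prems(1)] \<open>d > 0\<close> d_def by simp
    moreover have "S' $ i $ i = 0" if "i \<notin> I" for i
    proof (cases "i = i0")
      case False
      then have "S $ i $ i = 0" using insert.prems(2) that by auto
      with psd_zero_diag_imp_zero[OF insert.prems(1) this, of i0] show ?thesis by (simp add: S'_def)
    qed (use \<open>d > 0\<close> in \<open>simp add: S'_def d_def\<close>)
    ultimately obtain L' where L': "L' ** transpose L' = S'" and L'0: "\<forall>r c. c \<notin> I \<longrightarrow> L' $ r $ c = 0"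
      using insert.IH by blast
    define u where "u = (\<chi> r. S $ r $ i0 / sqrt d)"
    have "(\<chi> r s. u $ r * u $ s) + S' = S"
      using \<open>d > 0\<close> by (simp add: vec_eq_iff u_def S'_def real_sqrt_mult[symmetric])
    then have "replace_column i0 u L' ** transpose (replace_column i0 u L') = S"
      using gram_replace_zero_column[of L' i0 u] L'0 insert.hyps(2) L' by simp
    moreover have "\<forall>r c. c \<notin> insert i0 I \<longrightarrow> replace_column i0 u L' $ r $ c = 0"
      using L'0 by (simp add: replace_column_def)
    ultimately show ?thesis by blast
  qed
qed

lemma psd_factor:
  fixes S :: "real^'n^'n"
  assumes "psd_mat S"
  shows "\<exists>L::real^'n^'n. L ** transpose L = S"
  using psd_factor_supported[OF finite_class.finite_UNIV assms] by blast

section \<open>The discrete Lyapunov equation\<close>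

lemma congruence_matpow_fixpoint:
  fixes M D :: "'a::comm_semiring_1^'n^'n"
  assumes "D = M ** D ** transpose M"
  shows "D = matpow M k ** D ** transpose (matpow M k)"
proof (induction k)
  case (Suc k)
  have "matpow M (Suc k) ** D ** transpose (matpow M (Suc k))
      = M ** (matpow M k ** D ** transpose (matpow M k)) ** transpose M"
    by (simp add: matrix_transpose_mul matrix_mul_assoc)
  also have "\<dots> = D" using Suc.IH assms by simp
  finally show ?case by simp
qed simp

lemma congruence_matpow_tendsto_0:
  fixes M D :: "real^'n^'n"
  assumes "spec_rad M < 1"
  shows "(\<lambda>k. (matpow M k ** D ** transpose (matpow M k)) $ i $ j) \<longlonglongrightarrow> 0"
proof -
  have "(\<lambda>k. \<Sum>l\<in>UNIV. (\<Sum>m\<in>UNIV. matpow M k $ i $ m * D $ m $ l) * matpow M k $ j $ l)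
     \<longlonglongrightarrow> (\<Sum>l\<in>UNIV. (\<Sum>m\<in>UNIV. 0 * D $ m $ l) * 0)"
    by (intro tendsto_sum tendsto_mult tendsto_const matpow_nth_tendsto_0[OF assms])
  then show ?thesis by (simp add: matrix_matrix_mult_def transpose_def)
qed

lemma lyapunov_unique:
  fixes M W X Y :: "real^'n^'n"
  assumes "spec_rad M < 1"
    and "X = W + M ** X ** transpose M" and "Y = W + M ** Y ** transpose M"
  shows "X = Y"
proof -
  have "M ** X ** transpose M = X - W" "M ** Y ** transpose M = Y - W"
    using arg_cong[OF assms(2), of "\<lambda>Z. Z - W"] arg_cong[OF assms(3), of "\<lambda>Z. Z - W"] by simp_all
  then have D: "X - Y = M ** (X - Y) ** transpose M"
    by (simp add: matrix_diff_ldistrib matrix_diff_rdistrib)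
  have "(X - Y) $ i $ j = 0" for i j
  proof -
    have "(\<lambda>k. (matpow M k ** (X - Y) ** transpose (matpow M k)) $ i $ j) = (\<lambda>k. (X - Y) $ i $ j)"
      using congruence_matpow_fixpoint[OF D] by auto
    with congruence_matpow_tendsto_0[OF assms(1), of "X - Y" i j] show ?thesis
      by (simp add: LIMSEQ_const_iff)
  qed
  then show ?thesis by (simp add: vec_eq_iff)
qed

definition vec_of_mat :: "'a^'n^'m \<Rightarrow> 'a^('m \<times> 'n)" where
  "vec_of_mat X = (\<chi> ij. X $ fst ij $ snd ij)"

definition mat_of_vec :: "'a^('m \<times> 'n) \<Rightarrow> 'a^'n^'m" where
  "mat_of_vec v = (\<chi> i j. v $ (i, j))"

lemma mat_of_vec_of_mat [simp]: "mat_of_vec (vec_of_mat X) = X"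
  by (simp add: vec_of_mat_def mat_of_vec_def vec_eq_iff)

lemma vec_of_mat_of_vec [simp]: "vec_of_mat (mat_of_vec v) = v"
  by (simp add: vec_of_mat_def mat_of_vec_def vec_eq_iff)

lemma vec_of_mat_eq_iff [simp]: "vec_of_mat X = vec_of_mat Y \<longleftrightarrow> X = Y"
  by (metis mat_of_vec_of_mat)

lemma vec_of_mat_0 [simp]: "vec_of_mat 0 = 0"
  by (simp add: vec_of_mat_def vec_eq_iff)

definition lyapunov_op_mat :: "real^'n^'n \<Rightarrow> real^('n \<times> 'n)^('n \<times> 'n)" where
  "lyapunov_op_mat M =
     (\<chi> ij kl. (if ij = kl then 1 else 0) - M $ fst ij $ fst kl * M $ snd ij $ snd kl)"

lemma lyapunov_op_mat_vec_of_mat: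
  "lyapunov_op_mat M *v vec_of_mat X = vec_of_mat (X - M ** X ** transpose M)"
proof -
  have "(lyapunov_op_mat M *v vec_of_mat X) $ (i, j) = X $ i $ j - (M ** X ** transpose M) $ i $ j"
    for i j
  proof -
    have "(lyapunov_op_mat M *v vec_of_mat X) $ (i, j)
        = (\<Sum>kl\<in>UNIV. (if (i, j) = kl then 1 else 0) * X $ fst kl $ snd kl)
          - (\<Sum>kl\<in>UNIV. M $ i $ fst kl * M $ j $ snd kl * X $ fst kl $ snd kl)"
      by (simp add: matrix_vector_mult_def lyapunov_op_mat_def vec_of_mat_def left_diff_distrib
          sum_subtractf)
    also have "(\<Sum>kl\<in>UNIV. (if (i, j) = kl then 1 else 0) * X $ fst kl $ snd kl) = X $ i $ j"
      by (simp add: if_distrib if_distribR sum.delta cong: if_cong)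
    also have "(\<Sum>kl\<in>UNIV. M $ i $ fst kl * M $ j $ snd kl * X $ fst kl $ snd kl)
        = (\<Sum>k\<in>UNIV. \<Sum>l\<in>UNIV. M $ i $ k * M $ j $ l * X $ k $ l)"
      by (simp add: sum.cartesian_product case_prod_beta')
    also have "\<dots> = (\<Sum>l\<in>UNIV. (\<Sum>k\<in>UNIV. M $ i $ k * X $ k $ l) * M $ j $ l)"
      by (subst sum.swap) (simp add: sum_distrib_left sum_distrib_right mult_ac)
    finally show ?thesis
      by (simp add: matrix_matrix_mult_def transpose_def)
  qed
  then show ?thesis by (simp add: vec_eq_iff vec_of_mat_def)
qed

lemma det_lyapunov_op_mat_nonzero:
  assumes "spec_rad M < 1"
  shows "det (lyapunov_op_mat M) \<noteq> 0"
proof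
  assume "det (lyapunov_op_mat M) = 0"
  then obtain v where "v \<noteq> 0" and "lyapunov_op_mat M *v v = 0"
    using det_eq_0_imp_kernel by blast
  then have "vec_of_mat (mat_of_vec v - M ** mat_of_vec v ** transpose M) = vec_of_mat 0"
    using lyapunov_op_mat_vec_of_mat[of M "mat_of_vec v"] by (simp del: vec_of_mat_eq_iff)
  then have "mat_of_vec v = 0 + M ** mat_of_vec v ** transpose M"
    by (simp only: vec_of_mat_eq_iff) simp
  then have "mat_of_vec v = 0"
    using lyapunov_unique[OF assms] by (metis add_0 matrix_mul_assoc times0_left times0_right)
  with \<open>v \<noteq> 0\<close> show False by (metis vec_of_mat_0 vec_of_mat_of_vec)
qed

text \<open>The solution of \<open>X = W + M X M\<^sup>T\<close> given by Cramer's rule for the vectorized system, so that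
  it is visibly a rational function of \<open>M\<close>.\<close>
definition lyapunov_sol :: "real^'n^'n \<Rightarrow> real^'n^'n \<Rightarrow> real^'n^'n" where
  "lyapunov_sol M W =
     mat_of_vec (\<chi> kl. det (cramer_mat (lyapunov_op_mat M) (vec_of_mat W) kl) / det (lyapunov_op_mat M))"

lemma lyapunov_sol_eq:
  assumes "det (lyapunov_op_mat M) \<noteq> 0"
  shows "lyapunov_sol M W = W + M ** lyapunov_sol M W ** transpose M"
proof -
  have "invertible (lyapunov_op_mat M)" using assms invertible_det_nz by blast
  then obtain x where "lyapunov_op_mat M *v x = vec_of_mat W"
    by (metis invertible_def matrix_vector_mul_assoc matrix_vector_mul_lid)
  then have "vec_of_mat (lyapunov_sol M W) = x"
    using cramer_mat_iff[OF assms] by (simp add: lyapunov_sol_def)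
  with \<open>lyapunov_op_mat M *v x = vec_of_mat W\<close>
  have "lyapunov_sol M W - M ** lyapunov_sol M W ** transpose M = W"
    by (metis lyapunov_op_mat_vec_of_mat vec_of_mat_eq_iff)
  then show ?thesis by (simp add: diff_eq_eq add.commute)
qed

lemma Sigma_K_eq_lyapunov_sol:
  assumes "spec_rad (A - B ** K) < 1"
  shows "Sigma_K A B Sw Ss K = lyapunov_sol (A - B ** K) (Sigma_wbar B Sw Ss)"
  unfolding Sigma_K_def
proof (rule the_equality)
  show "lyapunov_sol (A - B ** K) (Sigma_wbar B Sw Ss) = Sigma_wbar B Sw Ss
      + (A - B ** K) ** lyapunov_sol (A - B ** K) (Sigma_wbar B Sw Ss) ** transpose (A - B ** K)"
    by (rule lyapunov_sol_eq[OF det_lyapunov_op_mat_nonzero[OF assms]])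
  then show "S = lyapunov_sol (A - B ** K) (Sigma_wbar B Sw Ss)"
    if "S = Sigma_wbar B Sw Ss + (A - B ** K) ** S ** transpose (A - B ** K)" for S
    using lyapunov_unique[OF assms that] by simp
qed

lemma lyapunov_symmetric:
  fixes M W X :: "real^'n^'n"
  assumes "spec_rad M < 1" and "transpose W = W" and X: "X = W + M ** X ** transpose M"
  shows "transpose X = X"
proof (rule lyapunov_unique[OF assms(1) _ X])
  have "transpose X = transpose W + transpose (M ** X ** transpose M)"
    by (subst X) (rule transpose_add)
  then show "transpose X = W + M ** transpose X ** transpose M"
    using assms(2) by (simp add: matrix_transpose_mul matrix_mul_assoc)
qed

lemma quadratic_form_congruence_tendsto_0:
  fixes M X :: "real^'n^'n"
  assumes "spec_rad M < 1"
  shows "(\<lambda>k. (transpose (matpow M k) *v v) \<bullet> (X *v (transpose (matpow M k) *v v))) \<longlonglongrightarrow> 0"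
proof -
  have "(\<lambda>k. \<Sum>a\<in>UNIV. (\<Sum>c\<in>UNIV. matpow M k $ c $ a * v $ c) *
      (\<Sum>b\<in>UNIV. X $ a $ b * (\<Sum>c\<in>UNIV. matpow M k $ c $ b * v $ c)))
      \<longlonglongrightarrow> (\<Sum>a\<in>UNIV. (\<Sum>c\<in>UNIV. 0 * v $ c) * (\<Sum>b\<in>UNIV. X $ a $ b * (\<Sum>c\<in>UNIV. 0 * v $ c)))"
    by (intro tendsto_sum tendsto_mult tendsto_const matpow_nth_tendsto_0[OF assms])
  then show ?thesis
    by (simp add: inner_vec_def matrix_vector_mult_def transpose_def del: transpose_matrix_vector)
qed

lemma lyapunov_psd:
  fixes M W X :: "real^'n^'n"
  assumes M: "spec_rad M < 1" and W: "psd_mat W" and X: "X = W + M ** X ** transpose M"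
  shows "psd_mat X"
proof -
  have step: "v \<bullet> (X *v v) \<ge> (transpose M *v v) \<bullet> (X *v (transpose M *v v))" for v
  proof -
    have "v \<bullet> (X *v v) = v \<bullet> (W *v v) + v \<bullet> ((M ** X ** transpose M) *v v)"
      by (subst X) (simp add: matrix_vector_mult_add_rdistrib inner_add_right)
    then show ?thesis
      using W unfolding psd_mat_def inner_congruence by simp
  qed
  have iter: "v \<bullet> (X *v v) \<ge> (transpose (matpow M k) *v v) \<bullet> (X *v (transpose (matpow M k) *v v))"
    for k v
  proof (induction k arbitrary: v)
    case (Suc k)
    have e: "transpose (matpow M (Suc k)) *v v = transpose (matpow M k) *v (transpose M *v v)"
      by (simp only: matpow.simps matrix_transpose_mul matrix_vector_mul_assoc)
    show ?case using step[of v] Suc.IH[of "transpose M *v v"] unfolding e by linarith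
  qed simp
  have "v \<bullet> (X *v v) \<ge> 0" for v
    using LIMSEQ_le_const2[OF quadratic_form_congruence_tendsto_0[OF M]] iter by blast
  moreover have "transpose X = X"
    using lyapunov_symmetric[OF M _ X] W by (simp add: psd_mat_def)
  ultimately show ?thesis unfolding psd_mat_def by blast
qed

section \<open>The Gaussian tail function\<close>

lemma std_normal_density_eq: "std_normal_density = (\<lambda>z. 1 / sqrt (2 * pi) * exp (- (z\<^sup>2) / 2))"
  by (simp add: fun_eq_iff std_normal_density_def)

lemma Qfun_eq_integral: "Qfun a = integral {a..} std_normal_density"
  unfolding Qfun_def std_normal_density_eq by (rule integral_mult_right[symmetric])

lemma std_normal_density_has_integral_Ici:
  "(std_normal_density has_integral (\<integral>t. indicator {a..} t * std_normal_density t \<partial>lborel)) {a..}"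
proof -
  have "integrable lborel (\<lambda>t. indicator {a..} t *\<^sub>R std_normal_density t)"
    by (rule integrable_mult_indicator) auto
  from has_integral_integral_lborel[OF this] show ?thesis
    by (simp add: has_integral_restrict_UNIV[symmetric, where s = "{a..}"] indicator_def of_bool_def
        if_distrib if_distribR cong: if_cong)
qed

lemma Qfun_has_integral: "(std_normal_density has_integral Qfun a) {a..}"
  using std_normal_density_has_integral_Ici[of a] by (simp add: Qfun_eq_integral integral_unique)

lemma Qfun_eq_lborel: "Qfun a = (\<integral>t. indicator {a..} t * std_normal_density t \<partial>lborel)"
  using std_normal_density_has_integral_Ici[of a] by (simp add: Qfun_eq_integral integral_unique)

lemma Qfun_nonneg: "Qfun a \<ge> 0"
  unfolding Qfun_eq_lborel by (rule integral_nonneg_AE) auto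

lemma Qfun_nn_integral:
  "ennreal (Qfun a) = (\<integral>\<^sup>+t. ennreal (indicator {a..} t * std_normal_density t) \<partial>lborel)"
  unfolding Qfun_eq_lborel
  by (rule nn_integral_eq_integral[symmetric])
     (use integrable_mult_indicator[of "{a..}" lborel std_normal_density] in auto)

lemma Qfun_has_real_derivative: "(Qfun has_real_derivative - std_normal_density x) (at x)"
proof -
  have cont: "continuous_on UNIV std_normal_density"
    unfolding std_normal_density_def[abs_def] by (intro continuous_intros) auto
  have split: "Qfun a = Qfun (x - 1) - integral {x - 1..a} std_normal_density"
    if "a \<in> {x - 1<..<x + 1}" for a
  proof -
    have "(std_normal_density has_integral integral {x - 1..a} std_normal_density) {x - 1..a}"
      by (intro integrable_integral integrable_continuous_interval continuous_on_subset[OF cont]) auto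
    moreover have "negligible ({x - 1..a} \<inter> {a..})"
      using that by (simp add: Int_atLeastAtMost)
    ultimately have "(std_normal_density has_integral (integral {x - 1..a} std_normal_density + Qfun a))
        ({x - 1..a} \<union> {a..})"
      by (intro has_integral_Un Qfun_has_integral)
    moreover have "{x - 1..a} \<union> {a..} = {x - 1..}" using that by auto
    ultimately have "(std_normal_density has_integral (integral {x - 1..a} std_normal_density + Qfun a))
        {x - 1..}"
      by simp
    then have "integral {x - 1..a} std_normal_density + Qfun a = Qfun (x - 1)"
      using Qfun_has_integral[of "x - 1"] by (rule has_integral_unique)
    then show ?thesis by simp
  qed
  have "((\<lambda>a. integral {x - 1..a} std_normal_density) has_real_derivative std_normal_density x)
      (at x within {x - 1..x + 1})"
    by (rule integral_has_real_derivative) (auto intro: continuous_on_subset[OF cont])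
  moreover have "at x within {x - 1..x + 1} = at x"
    by (rule at_within_interior) auto
  ultimately have "((\<lambda>a. Qfun (x - 1) - integral {x - 1..a} std_normal_density) has_real_derivative
      - std_normal_density x) (at x)"
    by (auto intro!: derivative_eq_intros)
  then show ?thesis
    by (rule has_field_derivative_transform_within_open[where S = "{x - 1<..<x + 1}"]) (use split in auto)
qed

lemma std_normal_density_has_real_derivative:
  "(std_normal_density has_real_derivative - x * std_normal_density x) (at x)"
proof -
  have "((\<lambda>x. c * exp (- (x\<^sup>2) / 2)) has_real_derivative c * (exp (- (x\<^sup>2) / 2) * (- x))) (at x)"
    for c
    by (auto intro!: derivative_eq_intros simp: power2_eq_square)
  from this[of "1 / sqrt (2 * pi)"] show ?thesis
    by (simp only: std_normal_density_eq) (simp add: algebra_simps)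
qed

lemma C1_deriv_on_Qfun: "C1_deriv_on UNIV Qfun"
proof (rule C1_deriv_on_real[OF Qfun_has_real_derivative])
  show "((\<lambda>x. - std_normal_density x) has_real_derivative x * std_normal_density x) (at x)" for x
    using std_normal_density_has_real_derivative by (auto intro!: derivative_eq_intros)
  show "continuous_on UNIV (\<lambda>x. x * std_normal_density x)"
    unfolding std_normal_density_eq by (intro continuous_intros) auto
qed

lemma Qfun_measurable [measurable]: "Qfun \<in> borel_measurable borel"
  using C1_on_imp_continuous_on[OF C1_deriv_on_imp_C1_on[OF C1_deriv_on_Qfun]]
  by (rule borel_measurable_continuous_onI)

lemma normal_tail_eq_Qfun:
  assumes "\<sigma> > 0"
  shows "(\<integral>\<^sup>+x. ennreal (indicator {b..} x * normal_density m \<sigma> x) \<partial>lborel) = ennreal (Qfun ((b - m) / \<sigma>))"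
proof -
  have "(\<integral>\<^sup>+x. ennreal (indicator {b..} x * normal_density m \<sigma> x) \<partial>lborel)
      = ennreal \<bar>\<sigma>\<bar> * (\<integral>\<^sup>+t. ennreal (indicator {b..} (m + \<sigma> * t) * normal_density m \<sigma> (m + \<sigma> * t)) \<partial>lborel)"
    by (rule nn_integral_real_affine) (use assms in auto)
  also have "(\<lambda>t. ennreal (indicator {b..} (m + \<sigma> * t) * normal_density m \<sigma> (m + \<sigma> * t)))
      = (\<lambda>t. ennreal (1 / \<sigma>) * ennreal (indicator {(b - m) / \<sigma>..} t * std_normal_density t))"
  proof
    fix t
    have "indicator {b..} (m + \<sigma> * t) = (indicator {(b - m) / \<sigma>..} t :: real)"
      using assms by (auto simp: indicator_def field_simps)
    moreover have "normal_density m \<sigma> (m + \<sigma> * t) = std_normal_density t / \<sigma>"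
      using assms by (simp add: normal_density_def power_mult_distrib real_sqrt_mult field_simps)
    ultimately show "ennreal (indicator {b..} (m + \<sigma> * t) * normal_density m \<sigma> (m + \<sigma> * t))
      = ennreal (1 / \<sigma>) * ennreal (indicator {(b - m) / \<sigma>..} t * std_normal_density t)"
      using assms by (simp add: ennreal_mult[symmetric] field_simps)
  qed
  also have "(\<integral>\<^sup>+t. ennreal (1 / \<sigma>) * ennreal (indicator {(b - m) / \<sigma>..} t * std_normal_density t) \<partial>lborel)
      = ennreal (1 / \<sigma>) * ennreal (Qfun ((b - m) / \<sigma>))"
    by (subst nn_integral_cmult) (auto simp: Qfun_nn_integral)
  finally show ?thesis
    using assms by (simp add: ennreal_mult[symmetric] mult.assoc[symmetric])
qed

text \<open>If \<open>Y \<sim> N(0, \<tau>\<^sup>2)\<close> then \<open>E[Q((\<epsilon> - Y) / s)] = P(s Z + Y \<ge> \<epsilon>)\<close> for an independent standard normal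
  \<open>Z\<close>, and \<open>s Z + Y \<sim> N(0, s\<^sup>2 + \<tau>\<^sup>2)\<close>.\<close>
lemma integral_normal_density_Qfun:
  assumes "s > 0" and "\<tau> > 0"
  shows "(\<integral>y. normal_density 0 \<tau> y * Qfun ((\<epsilon> - y) / s) \<partial>lborel) = Qfun (\<epsilon> / sqrt (s\<^sup>2 + \<tau>\<^sup>2))"
proof -
  define \<rho> where "\<rho> = sqrt (s\<^sup>2 + \<tau>\<^sup>2)"
  have "\<rho> > 0" using assms by (simp add: \<rho>_def add_pos_pos)
  have tail: "ennreal (Qfun ((\<epsilon> - y) / s))
      = (\<integral>\<^sup>+x. ennreal (indicator {\<epsilon>..} x * normal_density 0 s (x - y)) \<partial>lborel)" for y
    using normal_tail_eq_Qfun[OF \<open>s > 0\<close>, of \<epsilon> y]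
    by (simp add: normal_density_def power2_commute)
  have "(\<integral>\<^sup>+y. ennreal (normal_density 0 \<tau> y * Qfun ((\<epsilon> - y) / s)) \<partial>lborel)
      = (\<integral>\<^sup>+y. (\<integral>\<^sup>+x. ennreal (indicator {\<epsilon>..} x * normal_density 0 s (x - y) * normal_density 0 \<tau> y)
          \<partial>lborel) \<partial>lborel)"
    by (intro nn_integral_cong)
       (simp add: ennreal_mult[OF normal_density_nonneg Qfun_nonneg] tail nn_integral_cmult[symmetric]
         ennreal_mult[symmetric] mult_ac)
  also have "\<dots> = (\<integral>\<^sup>+x. (\<integral>\<^sup>+y. ennreal (indicator {\<epsilon>..} x * normal_density 0 s (x - y) * normal_density 0 \<tau> y)
      \<partial>lborel) \<partial>lborel)"
    by (rule lborel_pair.Fubini') measurable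
  also have "\<dots> = (\<integral>\<^sup>+x. ennreal (indicator {\<epsilon>..} x * normal_density 0 \<rho> x) \<partial>lborel)"
  proof (intro nn_integral_cong)
    fix x
    have "(\<integral>\<^sup>+y. ennreal (normal_density 0 s (x - y) * normal_density 0 \<tau> y) \<partial>lborel)
        = ennreal (normal_density 0 \<rho> x)"
      using fun_cong[OF conv_normal_density_zero_mean[OF assms], of x] unfolding \<rho>_def by simp
    then show "(\<integral>\<^sup>+y. ennreal (indicator {\<epsilon>..} x * normal_density 0 s (x - y) * normal_density 0 \<tau> y) \<partial>lborel)
        = ennreal (indicator {\<epsilon>..} x * normal_density 0 \<rho> x)"
      by (simp add: ennreal_mult nn_integral_cmult normal_density_nonneg mult.assoc)
  qed
  also have "\<dots> = ennreal (Qfun (\<epsilon> / \<rho>))"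
    using normal_tail_eq_Qfun[OF \<open>\<rho> > 0\<close>, of \<epsilon> 0] by simp
  finally show ?thesis
    unfolding \<rho>_def[symmetric]
    by (subst integral_eq_nn_integral) (auto simp: Qfun_nonneg)
qed

abbreviation std_normal_product :: "('n \<Rightarrow> real) measure" where
  "std_normal_product \<equiv> PiM UNIV (\<lambda>_. std_normal_distribution)"

lemma prob_space_std_normal_distribution: "prob_space std_normal_distribution"
  by (rule prob_space_normal_density) simp

lemma prob_space_std_normal_product: "prob_space (std_normal_product :: ('n::finite \<Rightarrow> real) measure)"
  by (rule prob_space_PiM) (rule prob_space_std_normal_distribution)

lemma distr_std_normal_product_component:
  "distr (std_normal_product :: ('n::finite \<Rightarrow> real) measure) M (\<lambda>z. z i) = std_normal_distribution"
  if "sets M = sets borel"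
proof -
  have "distr std_normal_product M (\<lambda>z. z i) = distr std_normal_product std_normal_distribution (\<lambda>z. z i)"
    by (rule distr_cong) (use that in auto)
  also have "\<dots> = std_normal_distribution"
    by (rule distr_PiM_component) (auto intro: prob_space_std_normal_distribution)
  finally show ?thesis .
qed

lemma std_normal_product_component_distributed:
  "distributed (std_normal_product :: ('n::finite \<Rightarrow> real) measure) lborel (\<lambda>z. z i) std_normal_density"
  unfolding distributed_def
  using distr_std_normal_product_component[of lborel i] by (auto simp: measurable_component_singleton)

lemma std_normal_product_indep_components:
  "prob_space.indep_vars (std_normal_product :: ('n::finite \<Rightarrow> real) measure) (\<lambda>_. borel) (\<lambda>i z. z i) UNIV"
proof -
  interpret P: prob_space "std_normal_product :: ('n \<Rightarrow> real) measure"
    by (rule prob_space_std_normal_product)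
  have "(\<lambda>z. z i) \<in> measurable (std_normal_product :: ('n \<Rightarrow> real) measure) borel" for i
    by (subst measurable_cong_sets[OF refl, of _ std_normal_distribution]) auto
  moreover have "distr std_normal_product (PiM UNIV (\<lambda>_. borel)) (\<lambda>x. \<lambda>i\<in>UNIV. x i)
      = PiM UNIV (\<lambda>i. distr (std_normal_product :: ('n \<Rightarrow> real) measure) borel (\<lambda>z. z i))"
  proof -
    have "distr std_normal_product (PiM UNIV (\<lambda>_. borel)) (\<lambda>x. \<lambda>i\<in>UNIV. x i)
        = distr std_normal_product (PiM UNIV (\<lambda>_. borel)) (\<lambda>x. x)"
      by (rule distr_cong) (auto simp: restrict_def)
    also have "\<dots> = (std_normal_product :: ('n \<Rightarrow> real) measure)"
      by (rule distr_id2, rule sets_PiM_cong) auto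
    finally show ?thesis by (simp add: distr_std_normal_product_component)
  qed
  ultimately show ?thesis
    by (subst P.indep_vars_iff_distr_eq_PiM) auto
qed

lemma std_normal_product_inner_distributed:
  fixes c :: "real^'n"
  assumes "c \<noteq> 0"
  shows "distributed std_normal_product lborel (\<lambda>z. c \<bullet> (\<chi> i. z i)) (normal_density 0 (norm c))"
proof -
  interpret P: prob_space "std_normal_product :: ('n \<Rightarrow> real) measure"
    by (rule prob_space_std_normal_product)
  define I where "I = {i. c $ i \<noteq> 0}"
  have I: "finite I" "I \<noteq> {}" using assms by (auto simp: I_def vec_eq_iff)
  have "P.indep_vars (\<lambda>_. borel) (\<lambda>i z. c $ i * z i) UNIV"
    by (rule P.indep_vars_compose2[OF std_normal_product_indep_components]) auto
  then have indep: "P.indep_vars (\<lambda>_. borel) (\<lambda>i z. c $ i * z i) I"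
    by (rule P.indep_vars_subset) auto
  have components: "distributed std_normal_product lborel (\<lambda>z. c $ i * z i) (normal_density 0 \<bar>c $ i\<bar>)"
    if "i \<in> I" for i
    using P.normal_density_affine[OF std_normal_product_component_distributed, of "c $ i" 0 i] that
    by (simp add: I_def)
  have "distributed std_normal_product lborel (\<lambda>z. \<Sum>i\<in>I. c $ i * z i)
      (normal_density (\<Sum>i\<in>I. 0) (sqrt (\<Sum>i\<in>I. \<bar>c $ i\<bar>\<^sup>2)))"
    by (rule P.sum_indep_normal[OF I indep]) (auto simp: I_def intro: components)
  moreover have "(\<Sum>i\<in>I. c $ i * z i) = c \<bullet> (\<chi> i. z i)" for z :: "'n \<Rightarrow> real"
  proof -
    have "(\<Sum>i\<in>I. c $ i * z i) = (\<Sum>i\<in>UNIV. c $ i * z i)"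
      by (rule sum.mono_neutral_left) (auto simp: I_def)
    then show ?thesis by (simp add: inner_vec_def)
  qed
  moreover have "(\<Sum>i\<in>I. \<bar>c $ i\<bar>\<^sup>2) = c \<bullet> c"
  proof -
    have "(\<Sum>i\<in>I. \<bar>c $ i\<bar>\<^sup>2) = (\<Sum>i\<in>I. c $ i * c $ i)"
      by (simp add: power2_eq_square)
    also have "\<dots> = (\<Sum>i\<in>UNIV. c $ i * c $ i)"
      by (rule sum.mono_neutral_left) (auto simp: I_def)
    finally show ?thesis by (simp add: inner_vec_def)
  qed
  ultimately show ?thesis by (simp add: norm_eq_sqrt_inner)
qed

lemma integral_Qfun_affine_std_normal_product:
  fixes c :: "real^'n"
  assumes "s > 0"
  shows "(\<integral>z. Qfun ((\<epsilon> - c \<bullet> (\<chi> i. z i)) / s) \<partial>std_normal_product) = Qfun (\<epsilon> / sqrt (s\<^sup>2 + c \<bullet> c))"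
proof (cases "c = 0")
  case True
  interpret P: prob_space "std_normal_product :: ('n \<Rightarrow> real) measure"
    by (rule prob_space_std_normal_product)
  show ?thesis using True assms by (simp add: P.prob_space)
next
  case False
  have "(\<integral>z. Qfun ((\<epsilon> - c \<bullet> (\<chi> i. z i)) / s) \<partial>std_normal_product)
      = (\<integral>y. normal_density 0 (norm c) y * Qfun ((\<epsilon> - y) / s) \<partial>lborel)"
    by (rule distributed_integral[OF std_normal_product_inner_distributed[OF False], symmetric]) auto
  also have "\<dots> = Qfun (\<epsilon> / sqrt (s\<^sup>2 + c \<bullet> c))"
    using integral_normal_density_Qfun[OF assms, of "norm c"] False
    by (simp add: power2_norm_eq_inner)
  finally show ?thesis .
qed

lemma gauss_expect_Qfun_affine:
  fixes \<Sigma> :: "real^'n^'n"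
  assumes "psd_mat \<Sigma>" and "s > 0"
  shows "gauss_expect \<Sigma> (\<lambda>x. Qfun ((\<epsilon> - w \<bullet> x) / s)) = Qfun (\<epsilon> / sqrt (s\<^sup>2 + w \<bullet> (\<Sigma> *v w)))"
proof -
  define L where "L = (SOME L::real^'n^'n. L ** transpose L = \<Sigma>)"
  have L: "L ** transpose L = \<Sigma>"
    unfolding L_def by (rule someI_ex) (rule psd_factor[OF assms(1)])
  have "w \<bullet> (L *v z) = (transpose L *v w) \<bullet> z" for z
    by (rule inner_matrix_vector)
  moreover have "(transpose L *v w) \<bullet> (transpose L *v w) = w \<bullet> (\<Sigma> *v w)"
    by (simp only: inner_matrix_vector[symmetric] matrix_vector_mul_assoc L)
  ultimately show ?thesis
    unfolding gauss_expect_def Let_def L_def[symmetric]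
    by (simp add: integral_Qfun_affine_std_normal_product[OF assms(2)] del: transpose_matrix_vector)
qed

section \<open>Smoothness of the cost and of the constraint\<close>

definition C1_deriv_on_entries :: "'a::real_normed_vector set \<Rightarrow> ('a \<Rightarrow> real^'m^'k) \<Rightarrow> bool" where
  "C1_deriv_on_entries U F \<longleftrightarrow> (\<forall>i j. C1_deriv_on U (\<lambda>x. F x $ i $ j))"

lemma C1_deriv_on_entries_const: "C1_deriv_on_entries U (\<lambda>x. C)"
  unfolding C1_deriv_on_entries_def by (auto intro: C1_deriv_on_const)

lemma C1_deriv_on_entries_add:
  "C1_deriv_on_entries U F \<Longrightarrow> C1_deriv_on_entries U G \<Longrightarrow> C1_deriv_on_entries U (\<lambda>x. F x + G x)"
  unfolding C1_deriv_on_entries_def by (auto intro: C1_deriv_on_add)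

lemma C1_deriv_on_entries_diff:
  "C1_deriv_on_entries U F \<Longrightarrow> C1_deriv_on_entries U G \<Longrightarrow> C1_deriv_on_entries U (\<lambda>x. F x - G x)"
  unfolding C1_deriv_on_entries_def by (auto intro: C1_deriv_on_diff)

lemma C1_deriv_on_entries_mult:
  "C1_deriv_on_entries U F \<Longrightarrow> C1_deriv_on_entries U G \<Longrightarrow> C1_deriv_on_entries U (\<lambda>x. F x ** G x)"
  unfolding C1_deriv_on_entries_def matrix_matrix_mult_def
  by (auto intro!: C1_deriv_on_sum C1_deriv_on_mult)

lemma C1_deriv_on_entries_transpose:
  "C1_deriv_on_entries U F \<Longrightarrow> C1_deriv_on_entries U (\<lambda>x. transpose (F x))"
  unfolding C1_deriv_on_entries_def by (simp add: transpose_def)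

lemma C1_deriv_on_entries_id: "C1_deriv_on_entries U (\<lambda>K. K)"
  unfolding C1_deriv_on_entries_def
  by (auto intro: C1_deriv_on_linear bounded_linear_compose[OF bounded_linear_vec_nth bounded_linear_vec_nth])

lemma C1_deriv_on_det:
  "C1_deriv_on_entries U F \<Longrightarrow> C1_deriv_on U (\<lambda>x. det (F x))"
  unfolding C1_deriv_on_entries_def det_def
  by (auto intro!: C1_deriv_on_sum C1_deriv_on_mult C1_deriv_on_const C1_deriv_on_prod)

lemma C1_deriv_on_trace:
  "C1_deriv_on_entries U F \<Longrightarrow> C1_deriv_on U (\<lambda>x. trace (F x))"
  unfolding C1_deriv_on_entries_def trace_def by (auto intro: C1_deriv_on_sum)

lemma C1_deriv_on_quadratic_form:
  "C1_deriv_on_entries U F \<Longrightarrow> C1_deriv_on U (\<lambda>x. q \<bullet> (F x *v q))"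
  unfolding C1_deriv_on_entries_def inner_vec_def matrix_vector_mult_def
  by (auto intro!: C1_deriv_on_sum C1_deriv_on_mult C1_deriv_on_const)

lemma C1_deriv_on_entries_lyapunov_op_mat:
  fixes F :: "'a::real_normed_vector \<Rightarrow> real^'n^'n"
  assumes "C1_deriv_on_entries U F"
  shows "C1_deriv_on_entries U (\<lambda>x. lyapunov_op_mat (F x))"
  unfolding C1_deriv_on_entries_def
proof (intro allI)
  fix ij kl :: "'n \<times> 'n"
  have "C1_deriv_on U (\<lambda>x. (if ij = kl then 1 else 0) - F x $ fst ij $ fst kl * F x $ snd ij $ snd kl)"
    using assms unfolding C1_deriv_on_entries_def
    by (intro C1_deriv_on_diff C1_deriv_on_mult C1_deriv_on_const) auto
  then show "C1_deriv_on U (\<lambda>x. lyapunov_op_mat (F x) $ ij $ kl)"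
    by (simp add: lyapunov_op_mat_def)
qed

lemma C1_deriv_on_entries_cramer_mat:
  assumes "C1_deriv_on_entries U F"
  shows "C1_deriv_on_entries U (\<lambda>x. cramer_mat (F x) b k)"
  unfolding C1_deriv_on_entries_def
proof (intro allI)
  fix i j
  show "C1_deriv_on U (\<lambda>x. cramer_mat (F x) b k $ i $ j)"
    using assms unfolding C1_deriv_on_entries_def
    by (cases "j = k") (simp_all add: cramer_mat_def C1_deriv_on_const)
qed

lemma C1_deriv_on_entries_lyapunov_sol:
  assumes "C1_deriv_on_entries U F" and "\<And>x. x \<in> U \<Longrightarrow> det (lyapunov_op_mat (F x)) \<noteq> 0"
  shows "C1_deriv_on_entries U (\<lambda>x. lyapunov_sol (F x) W)"
  unfolding C1_deriv_on_entries_def lyapunov_sol_def mat_of_vec_def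
  by (auto intro!: C1_deriv_on_divide C1_deriv_on_det C1_deriv_on_entries_cramer_mat
      C1_deriv_on_entries_lyapunov_op_mat assms)

definition stabilizing_gains :: "real^'n^'n \<Rightarrow> real^'p^'n \<Rightarrow> (real^'n^'p) set" where
  "stabilizing_gains A B = {K. spec_rad (A - B ** K) < 1}"

lemma open_stabilizing_gains:
  fixes A :: "real^'n^'n" and B :: "real^'p^'n"
  shows "open (stabilizing_gains A B)"
proof -
  have "continuous_on UNIV (\<lambda>K::real^'n^'p. A - B ** K)"
    unfolding matrix_matrix_mult_def by (intro continuous_intros)
  then have "open ((\<lambda>K. A - B ** K) -` {M. spec_rad M < 1})"
    by (rule open_vimage[OF open_spec_rad_less_1])
  then show ?thesis by (simp add: stabilizing_gains_def vimage_def)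
qed

lemma Sigma_K_eq:
  assumes "K \<in> stabilizing_gains A B"
  shows "Sigma_K A B Sw Ss K
    = Sigma_wbar B Sw Ss + (A - B ** K) ** Sigma_K A B Sw Ss K ** transpose (A - B ** K)"
proof -
  have stable: "spec_rad (A - B ** K) < 1" using assms by (simp add: stabilizing_gains_def)
  show ?thesis
    unfolding Sigma_K_eq_lyapunov_sol[OF stable]
    by (rule lyapunov_sol_eq[OF det_lyapunov_op_mat_nonzero[OF stable]])
qed

lemma psd_Sigma_wbar: "psd_mat Sw \<Longrightarrow> psd_mat Ss \<Longrightarrow> psd_mat (Sigma_wbar B Sw Ss)"
  unfolding Sigma_wbar_def by (intro psd_add psd_congruence)

lemma psd_Sigma_K:
  assumes "K \<in> stabilizing_gains A B" and "psd_mat Sw" and "psd_mat Ss"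
  shows "psd_mat (Sigma_K A B Sw Ss K)"
  using assms lyapunov_psd[OF _ psd_Sigma_wbar Sigma_K_eq] by (simp add: stabilizing_gains_def)

lemma quadratic_form_Sigma_K:
  assumes "K \<in> stabilizing_gains A B"
  shows "q \<bullet> (Sigma_K A B Sw Ss K *v q) = q \<bullet> (Sigma_wbar B Sw Ss *v q)
    + (transpose (A - B ** K) *v q) \<bullet> (Sigma_K A B Sw Ss K *v (transpose (A - B ** K) *v q))"
  by (subst Sigma_K_eq[OF assms])
     (simp add: matrix_vector_mult_add_rdistrib inner_add_right inner_congruence
       del: transpose_matrix_vector)

lemma quadratic_form_Sigma_K_ge:
  assumes "K \<in> stabilizing_gains A B" and "psd_mat Sw" and "psd_mat Ss"
  shows "q \<bullet> (Sigma_K A B Sw Ss K *v q) \<ge> q \<bullet> (Sigma_wbar B Sw Ss *v q)"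
proof -
  have "(transpose (A - B ** K) *v q) \<bullet> (Sigma_K A B Sw Ss K *v (transpose (A - B ** K) *v q)) \<ge> 0"
    using psd_Sigma_K[OF assms] unfolding psd_mat_def by blast
  then show ?thesis using quadratic_form_Sigma_K[OF assms(1), of q Sw Ss] by linarith
qed

lemma gauss_expect_const: "gauss_expect (\<Sigma>::real^'n^'n) (\<lambda>x. c) = c"
proof -
  interpret prob_space "std_normal_product :: ('n \<Rightarrow> real) measure"
    by (rule prob_space_std_normal_product)
  show ?thesis by (simp add: gauss_expect_def Let_def prob_space)
qed

text \<open>If \<open>q \<bullet> (Sigma_wbar B Sw Ss *v q) = 0\<close>, the division in \<open>a_fun\<close> is by zero, so \<open>a_fun\<close>
  vanishes identically and \<open>Jc\<close> is the constant \<open>Qfun 0\<close>.\<close>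
lemma Jc_eq_Qfun:
  assumes "K \<in> stabilizing_gains A B" and "psd_mat Sw" and "psd_mat Ss"
  shows "Jc A B Sw Ss \<epsilon> q K = (if q \<bullet> (Sigma_wbar B Sw Ss *v q) = 0 then Qfun 0
    else Qfun (\<epsilon> / sqrt (q \<bullet> (Sigma_K A B Sw Ss K *v q))))"
proof (cases "q \<bullet> (Sigma_wbar B Sw Ss *v q) = 0")
  case True
  then show ?thesis by (simp add: Jc_def a_fun_def gauss_expect_const)
next
  case False
  let ?M = "A - B ** K" and ?W = "Sigma_wbar B Sw Ss" and ?\<Sigma> = "Sigma_K A B Sw Ss K"
  have "q \<bullet> (?W *v q) > 0"
    using False psd_Sigma_wbar[OF assms(2,3)] by (simp add: psd_mat_def order_less_le)
  have "Jc A B Sw Ss \<epsilon> q K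
      = gauss_expect ?\<Sigma> (\<lambda>x. Qfun ((\<epsilon> - (transpose ?M *v q) \<bullet> x) / sqrt (q \<bullet> (?W *v q))))"
    by (simp add: Jc_def a_fun_def inner_matrix_vector del: transpose_matrix_vector)
  also have "\<dots> = Qfun (\<epsilon> / sqrt (q \<bullet> (?W *v q) + (transpose ?M *v q) \<bullet> (?\<Sigma> *v (transpose ?M *v q))))"
    using \<open>q \<bullet> (?W *v q) > 0\<close>
    by (simp add: gauss_expect_Qfun_affine[OF psd_Sigma_K[OF assms]] del: transpose_matrix_vector)
  also have "q \<bullet> (?W *v q) + (transpose ?M *v q) \<bullet> (?\<Sigma> *v (transpose ?M *v q)) = q \<bullet> (?\<Sigma> *v q)"
    by (rule quadratic_form_Sigma_K[OF assms(1), symmetric])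
  finally show ?thesis using False by simp
qed

lemma C1_deriv_on_entries_closed_loop_lyapunov_sol:
  "C1_deriv_on_entries (stabilizing_gains A B) (\<lambda>K. lyapunov_sol (A - B ** K) W)"
  by (intro C1_deriv_on_entries_lyapunov_sol C1_deriv_on_entries_diff C1_deriv_on_entries_const
      C1_deriv_on_entries_mult C1_deriv_on_entries_id det_lyapunov_op_mat_nonzero)
     (simp add: stabilizing_gains_def)

lemma C1_deriv_on_Jcost: "C1_deriv_on (stabilizing_gains A B) (Jcost A B Sw Ss Q R)"
proof (rule C1_deriv_on_cong[OF open_stabilizing_gains])
  show "Jcost A B Sw Ss Q R K = trace ((Q + transpose K ** R ** K) ** lyapunov_sol (A - B ** K)
      (Sigma_wbar B Sw Ss)) + trace (R ** Ss)" if "K \<in> stabilizing_gains A B" for K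
    using that by (simp add: Jcost_def Sigma_K_eq_lyapunov_sol stabilizing_gains_def)
  show "C1_deriv_on (stabilizing_gains A B) (\<lambda>K. trace ((Q + transpose K ** R ** K) **
      lyapunov_sol (A - B ** K) (Sigma_wbar B Sw Ss)) + trace (R ** Ss))"
    by (intro C1_deriv_on_add C1_deriv_on_const C1_deriv_on_trace C1_deriv_on_entries_mult
        C1_deriv_on_entries_add C1_deriv_on_entries_const C1_deriv_on_entries_transpose
        C1_deriv_on_entries_id C1_deriv_on_entries_closed_loop_lyapunov_sol)
qed

lemma C1_deriv_on_Jc:
  assumes "psd_mat Sw" and "psd_mat Ss"
  shows "C1_deriv_on (stabilizing_gains A B) (Jc A B Sw Ss \<epsilon> q)"
proof (cases "q \<bullet> (Sigma_wbar B Sw Ss *v q) = 0")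
  case True
  show ?thesis
    by (rule C1_deriv_on_cong[OF open_stabilizing_gains _ C1_deriv_on_const])
       (simp add: Jc_eq_Qfun assms True)
next
  case False
  let ?v = "\<lambda>K. q \<bullet> (lyapunov_sol (A - B ** K) (Sigma_wbar B Sw Ss) *v q)"
  have "q \<bullet> (Sigma_wbar B Sw Ss *v q) > 0"
    using False psd_Sigma_wbar[OF assms] by (simp add: psd_mat_def order_less_le)
  then have pos: "?v K > 0" if "K \<in> stabilizing_gains A B" for K
    using quadratic_form_Sigma_K_ge[OF that assms, of q] that
    by (simp add: Sigma_K_eq_lyapunov_sol stabilizing_gains_def)
  have "C1_deriv_on (stabilizing_gains A B) (\<lambda>K. sqrt (?v K))"
    by (rule C1_deriv_on_compose[OF C1_deriv_on_sqrt C1_deriv_on_quadratic_form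
          [OF C1_deriv_on_entries_closed_loop_lyapunov_sol]]) (use pos in auto)
  then have "C1_deriv_on (stabilizing_gains A B) (\<lambda>K. \<epsilon> / sqrt (?v K))"
    using pos by (intro C1_deriv_on_divide C1_deriv_on_const) (auto simp: less_le)
  then have "C1_deriv_on (stabilizing_gains A B) (\<lambda>K. Qfun (\<epsilon> / sqrt (?v K)))"
    by (rule C1_deriv_on_compose[OF C1_deriv_on_Qfun]) simp
  then show ?thesis
    by (rule C1_deriv_on_cong[OF open_stabilizing_gains, rotated])
       (simp add: Jc_eq_Qfun assms False Sigma_K_eq_lyapunov_sol stabilizing_gains_def)
qed

theorem lemma2:
  fixes A :: "real^'n^'n" and B :: "real^'p^'n"
    and Sw :: "real^'n^'n" and Ss :: "real^'p^'p"
    and Q :: "real^'n^'n" and R :: "real^'p^'p"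
    and \<epsilon> \<delta> lam :: real and q :: "real^'n"
  assumes "stabilizable A B"
    and "pos_def_mat Q" and "pos_def_mat R"
    and "detectable A (psd_sqrt Q)"
    and "psd_mat Sw" and "psd_mat Ss"
    and "\<epsilon> > 0" and "\<delta> > 0"
    and "lam > 0"
  shows "C2_on {K::real^'n^'p. spec_rad (A - B ** K) < 1}
           (\<lambda>K. Lagr A B Sw Ss Q R \<epsilon> \<delta> q K lam)"
proof -
  have "C1_deriv_on (stabilizing_gains A B)
      (\<lambda>K. Jcost A B Sw Ss Q R K + lam * (Jc A B Sw Ss \<epsilon> q K - \<delta>))"
    by (intro C1_deriv_on_add C1_deriv_on_mult C1_deriv_on_diff C1_deriv_on_const
        C1_deriv_on_Jcost C1_deriv_on_Jc assms(5,6))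
  then show ?thesis
    unfolding Lagr_def stabilizing_gains_def[symmetric] by (rule C1_deriv_on_imp_C2_on)
qed

end
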